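(* Let $(M,g,f,\mu)$ be an isotropic quasi-Einstein Lorentzian structure of dimension $4$ with $\mu\neq-\frac12$. If $\operatorname{div}W=0$ and $W(X,Y,Z,\nabla f)=0$ for all vector fields $X,Y,Z$, then $\lambda=0$ and $(M,g)$ is a pure radiation metric with parallel rays.
   Context: Let $(M,g)$ be a pseudo-Riemannian manifold with Levi-Civita connection $\nabla$, Ricci tensor $\rho$, scalar curvature $\tau$, Hessian $\operatorname{Hes}_f=\nabla df$. The structure $(M,g,f,\mu)$, with $f$ a smooth function and $\mu$ a real constant, is called quasi-Einstein (qE) if there is a smooth function $\lambda$ with $\operatorname{Hes}_f+\rho-\mu\, df\otimes df=\lambda g$. It is called isotropic if $\nabla f$ is nowhere zero and null: $g(\nabla f,\nabla f)=0$. Curvature convention: $R(X,Y)=\nabla_{[X,Y]}-[\nabla_X,\nabla_Y]$, $R(X,Y,Z,T)=g(R(X,Y)Z,T)$. In dimension 4 the Weyl tensor is $W(X,Y,Z,T)=R(X,Y,Z,T)+\frac{\tau}{6}\{g(X,Z)g(Y,T)-g(X,T)g(Y,Z)\}+\frac12\{\rho(X,T)g(Y,Z)-\rho(X,Z)g(Y,T)+\rho(Y,Z)g(X,T)-\rho(Y,T)g(X,Z)\}$, and $\operatorname{div}W(X,Y,Z)=-\frac12\{(\nabla_X\rho)(Y,Z)-(\nabla_Y\rho)(X,Z)\}+\frac1{12}\{X(\tau)g(Y,Z)-Y(\tau)g(X,Z)\}$. A Lorentzian metric is a pure radiation metric with parallel rays if $\rho=\phi\,\omega\otimes\omega$ for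 some function $\phi$, where $\omega=g(V,\cdot)$ for a null parallel vector field $V$ (or, locally, a null vector field spanning a parallel line field). *)

theory Defs
  imports "HOL-Analysis.Analysis"
begin

text \<open>Local coordinate formalization: a chart domain U (open subset of real^4)
with metric components g x i j. All notions are written in coordinates.\<close>

definition pd :: "4 \<Rightarrow> (real^4 \<Rightarrow> real) \<Rightarrow> real^4 \<Rightarrow> real" where
  "pd i h x = deriv (\<lambda>t. h (x + t *\<^sub>R axis i 1)) 0"

fun diffs :: "4 list \<Rightarrow> (real^4 \<Rightarrow> real) \<Rightarrow> real^4 \<Rightarrow> real" where
  "diffs [] h = h"
| "diffs (i # is) h = pd i (diffs is h)"

definition smooth_on :: "(real^4) set \<Rightarrow> (real^4 \<Rightarrow> real) \<Rightarrow> bool" where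
  "smooth_on U h \<longleftrightarrow> (\<forall>is. diffs is h differentiable_on U)"

type_synonym metric = "real^4 \<Rightarrow> 4 \<Rightarrow> 4 \<Rightarrow> real"

definition bil :: "metric \<Rightarrow> real^4 \<Rightarrow> real^4 \<Rightarrow> real^4 \<Rightarrow> real" where
  "bil g x v w = (\<Sum>i\<in>UNIV. \<Sum>j\<in>UNIV. g x i j * v $ i * w $ j)"

definition ginv :: "metric \<Rightarrow> real^4 \<Rightarrow> 4 \<Rightarrow> 4 \<Rightarrow> real" where
  "ginv g x i j = matrix_inv (\<chi> a b. g x a b) $ i $ j"

definition lorentzian_at :: "metric \<Rightarrow> real^4 \<Rightarrow> bool" where
  "lorentzian_at g x \<longleftrightarrow> (\<forall>i j. g x i j = g x j i) \<and>
     (\<exists>e :: 4 \<Rightarrow> real^4. \<forall>a b. bil g x (e a) (e b) =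
        (if a = b then (if a = 0 then -1 else 1) else 0))"

definition lorentz_metric :: "(real^4) set \<Rightarrow> metric \<Rightarrow> bool" where
  "lorentz_metric U g \<longleftrightarrow> (\<forall>i j. smooth_on U (\<lambda>x. g x i j)) \<and> (\<forall>x\<in>U. lorentzian_at g x)"

text \<open>Christoffel symbols: chr g k i j = Gamma^k_{ij}.\<close>
definition chr :: "metric \<Rightarrow> 4 \<Rightarrow> 4 \<Rightarrow> 4 \<Rightarrow> real^4 \<Rightarrow> real" where
  "chr g k i j x = 1/2 * (\<Sum>l\<in>UNIV. ginv g x k l *
      (pd i (\<lambda>y. g y j l) x + pd j (\<lambda>y. g y i l) x - pd l (\<lambda>y. g y i j) x))"

text \<open>Standard components R^p_{kij} of [nabla_i,nabla_j] d_k.\<close>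
definition rstd :: "metric \<Rightarrow> 4 \<Rightarrow> 4 \<Rightarrow> 4 \<Rightarrow> 4 \<Rightarrow> real^4 \<Rightarrow> real" where
  "rstd g p k i j x = pd i (chr g p j k) x - pd j (chr g p i k) x
     + (\<Sum>m\<in>UNIV. chr g m j k x * chr g p i m x - chr g m i k x * chr g p j m x)"

text \<open>R(d_i,d_j,d_k,d_l) = g(R(d_i,d_j)d_k, d_l) with R(X,Y) = nabla_[X,Y] - [nabla_X,nabla_Y].\<close>
definition riem :: "metric \<Rightarrow> 4 \<Rightarrow> 4 \<Rightarrow> 4 \<Rightarrow> 4 \<Rightarrow> real^4 \<Rightarrow> real" where
  "riem g i j k l x = - (\<Sum>p\<in>UNIV. rstd g p k i j x * g x p l)"

text \<open>Ricci: rho(X,Y) = trace (Z \<mapsto> R(X,Z)Y).\<close>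
definition ric :: "metric \<Rightarrow> 4 \<Rightarrow> 4 \<Rightarrow> real^4 \<Rightarrow> real" where
  "ric g j k x = (\<Sum>i\<in>UNIV. \<Sum>l\<in>UNIV. ginv g x i l * riem g j i k l x)"

definition scal :: "metric \<Rightarrow> real^4 \<Rightarrow> real" where
  "scal g x = (\<Sum>j\<in>UNIV. \<Sum>k\<in>UNIV. ginv g x j k * ric g j k x)"

definition hes :: "metric \<Rightarrow> (real^4 \<Rightarrow> real) \<Rightarrow> 4 \<Rightarrow> 4 \<Rightarrow> real^4 \<Rightarrow> real" where
  "hes g f i j x = pd i (pd j f) x - (\<Sum>k\<in>UNIV. chr g k i j x * pd k f x)"

definition grad :: "metric \<Rightarrow> (real^4 \<Rightarrow> real) \<Rightarrow> real^4 \<Rightarrow> real^4" where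
  "grad g f x = (\<chi> k. \<Sum>j\<in>UNIV. ginv g x k j * pd j f x)"

definition weyl :: "metric \<Rightarrow> 4 \<Rightarrow> 4 \<Rightarrow> 4 \<Rightarrow> 4 \<Rightarrow> real^4 \<Rightarrow> real" where
  "weyl g i j k l x = riem g i j k l x
     + scal g x / 6 * (g x i k * g x j l - g x i l * g x j k)
     + 1/2 * (ric g i l x * g x j k - ric g i k x * g x j l
              + ric g j k x * g x i l - ric g j l x * g x i k)"

definition covric :: "metric \<Rightarrow> 4 \<Rightarrow> 4 \<Rightarrow> 4 \<Rightarrow> real^4 \<Rightarrow> real" where
  "covric g i j k x = pd i (ric g j k) x
     - (\<Sum>m\<in>UNIV. chr g m i j x * ric g m k x + chr g m i k x * ric g j m x)"

definition divW :: "metric \<Rightarrow> 4 \<Rightarrow> 4 \<Rightarrow> 4 \<Rightarrow> real^4 \<Rightarrow> real" where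
  "divW g i j k x = - 1/2 * (covric g i j k x - covric g j i k x)
     + 1/12 * (pd i (scal g) x * g x j k - pd j (scal g) x * g x i k)"

text \<open>Pure radiation with parallel rays (local version): near every point, rho = phi omega (x) omega,
 omega = g(V,.), V a nowhere-zero null vector field spanning a parallel line field
 (nabla_i V = alpha_i V).\<close>
definition pure_radiation_parallel :: "(real^4) set \<Rightarrow> metric \<Rightarrow> bool" where
  "pure_radiation_parallel U g \<longleftrightarrow> (\<forall>p\<in>U. \<exists>N. open N \<and> p \<in> N \<and> N \<subseteq> U \<and>
     (\<exists>(V :: real^4 \<Rightarrow> real^4) (\<phi> :: real^4 \<Rightarrow> real) (\<alpha> :: 4 \<Rightarrow> real^4 \<Rightarrow> real).
        (\<forall>k. smooth_on N (\<lambda>x. V x $ k)) \<and>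
        (\<forall>x\<in>N. V x \<noteq> 0 \<and> bil g x (V x) (V x) = 0 \<and>
           (\<forall>i k. pd i (\<lambda>y. V y $ k) x + (\<Sum>m\<in>UNIV. chr g k i m x * V x $ m) = \<alpha> i x * V x $ k) \<and>
           (\<forall>i j. ric g i j x = \<phi> x * (\<Sum>a\<in>UNIV. g x i a * V x $ a) * (\<Sum>b\<in>UNIV. g x j b * V x $ b)))))"

end

theory Submission
  imports Defs
begin

text \<open>
  Differentiating \<open>g(\<nabla>f, \<nabla>f) = 0\<close> gives \<open>Hes\<^sub>f(\<nabla>f, \<cdot>) = 0\<close>, so the quasi-Einstein
  equation yields \<open>\<rho>(\<nabla>f, \<cdot>) = \<lambda> df\<close>. The hypothesis \<open>W(\<cdot>, \<cdot>, \<cdot>, \<nabla>f) = 0\<close> then expresses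
  \<open>R(\<cdot>, \<cdot>, \<cdot>, \<nabla>f)\<close> through \<open>\<rho>\<close>, \<open>\<tau>\<close> and \<open>df\<close>, while the Ricci identity for \<open>\<nabla>df\<close> and
  the quasi-Einstein equation express the skew part of \<open>\<nabla>\<rho>\<close> through \<open>d\<lambda>\<close>,
  \<open>R(\<cdot>, \<cdot>, \<cdot>, \<nabla>f)\<close> and \<open>Hes\<^sub>f\<close>. Inserting both into \<open>div W = 0\<close>, taking a trace and
  dividing by \<open>1/2 + \<mu> \<noteq> 0\<close> gives \<open>\<tau> = 4\<lambda>\<close>, \<open>\<rho> = \<lambda> g + \<phi> df \<otimes> df\<close> and
  \<open>R(X, Y, Z, \<nabla>f) = -\<lambda>/3 (df(X) g(Y, Z) - df(Y) g(X, Z))\<close>.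
  Hence \<open>Hes\<^sub>f = (\<mu> - \<phi>) df \<otimes> df\<close> has rank one; by the Ricci identity
  \<open>R(X, Y, Z, \<nabla>f) df(T)\<close> is then symmetric in \<open>Z, T\<close>, and tracing this against the
  formula above forces \<open>\<lambda> = 0\<close>. Finally \<open>\<nabla>\<nabla>f = (\<mu> - \<phi>) df \<otimes> \<nabla>f\<close>, so \<open>\<nabla>f\<close> spans a parallel
  null line field, and \<open>\<rho> = \<phi> df \<otimes> df\<close>.
\<close>

section \<open>Coordinate partial derivatives\<close>

lemma has_derivative_along_line:
  fixes h :: "'a::real_normed_vector \<Rightarrow> real"
  assumes "(h has_derivative D) (at (y + s *\<^sub>R v))"
  shows "((\<lambda>t. h (y + t *\<^sub>R v)) has_real_derivative D v) (at s)"
proof -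
  have l: "((\<lambda>t. y + t *\<^sub>R v) has_derivative (\<lambda>t. t *\<^sub>R v)) (at s)"
    by (auto intro!: derivative_eq_intros)
  have "((\<lambda>t. h (y + t *\<^sub>R v)) has_derivative (\<lambda>t. D (t *\<^sub>R v))) (at s)"
    using diff_chain_at[OF l assms] by (simp add: o_def)
  moreover have "(\<lambda>t. D (t *\<^sub>R v)) = (*) (D v)"
    using has_derivative_linear[OF assms] by (auto simp: linear_scale fun_eq_iff)
  ultimately show ?thesis by (simp add: has_field_derivative_def)
qed

lemma pd_eq_derivative:
  assumes "(h has_derivative D) (at x)"
  shows "pd i h x = D (axis i 1)"
proof -
  have "((\<lambda>t. h (x + t *\<^sub>R axis i 1)) has_real_derivative D (axis i 1)) (at 0)"
    using has_derivative_along_line[of h D x 0 "axis i 1"] assms by simp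
  then show ?thesis unfolding pd_def by (rule DERIV_imp_deriv)
qed

lemma pd_along_line:
  assumes "h differentiable (at (y + s *\<^sub>R axis k 1))"
  shows "((\<lambda>\<sigma>. h (y + \<sigma> *\<^sub>R axis k 1)) has_real_derivative pd k h (y + s *\<^sub>R axis k 1)) (at s)"
proof -
  obtain D where D: "(h has_derivative D) (at (y + s *\<^sub>R axis k 1))"
    using assms unfolding differentiable_def by blast
  show ?thesis using has_derivative_along_line[OF D] pd_eq_derivative[OF D] by simp
qed

lemma pd_cong_open:
  assumes "open U" "x \<in> U" "\<And>y. y \<in> U \<Longrightarrow> h y = h' y"
  shows "pd i h x = pd i h' x"
proof -
  obtain e where e: "e > 0" "ball x e \<subseteq> U" using assms(1,2) open_contains_ball by blast
  have "eventually (\<lambda>t. x + t *\<^sub>R axis i (1::real) \<in> U) (nhds 0)"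
    unfolding eventually_nhds_metric
  proof (intro exI[of _ e] conjI allI impI)
    fix t :: real assume "dist t 0 < e"
    then have "x + t *\<^sub>R axis i 1 \<in> ball x e" by (simp add: dist_norm)
    then show "x + t *\<^sub>R axis i 1 \<in> U" using e by blast
  qed (use e in auto)
  then have "eventually (\<lambda>t. h (x + t *\<^sub>R axis i 1) = h' (x + t *\<^sub>R axis i 1)) (nhds 0)"
    by eventually_elim (simp add: assms(3))
  then show ?thesis unfolding pd_def by (rule deriv_cong_ev) simp
qed

lemma pd_const: "pd i (\<lambda>y. c) x = 0"
  by (rule pd_eq_derivative[where D="\<lambda>_. 0", simplified]) (rule has_derivative_const)

lemma pd_add:
  assumes "a differentiable (at x)" "b differentiable (at x)"
  shows "pd i (\<lambda>y. a y + b y) x = pd i a x + pd i b x"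
proof -
  obtain Da Db where d: "(a has_derivative Da) (at x)" "(b has_derivative Db) (at x)"
    using assms unfolding differentiable_def by blast
  from pd_eq_derivative[OF has_derivative_add[OF d]] pd_eq_derivative[OF d(1)] pd_eq_derivative[OF d(2)]
  show ?thesis by simp
qed

lemma pd_diff:
  assumes "a differentiable (at x)" "b differentiable (at x)"
  shows "pd i (\<lambda>y. a y - b y) x = pd i a x - pd i b x"
proof -
  obtain Da Db where d: "(a has_derivative Da) (at x)" "(b has_derivative Db) (at x)"
    using assms unfolding differentiable_def by blast
  from pd_eq_derivative[OF has_derivative_diff[OF d]] pd_eq_derivative[OF d(1)] pd_eq_derivative[OF d(2)]
  show ?thesis by simp
qed

lemma pd_mult:
  assumes "a differentiable (at x)" "b differentiable (at x)"
  shows "pd i (\<lambda>y. a y * b y) x = pd i a x * b x + a x * pd i b x"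
proof -
  obtain Da Db where d: "(a has_derivative Da) (at x)" "(b has_derivative Db) (at x)"
    using assms unfolding differentiable_def by blast
  from pd_eq_derivative[OF has_derivative_mult[OF d]] pd_eq_derivative[OF d(1)] pd_eq_derivative[OF d(2)]
  show ?thesis by simp
qed

lemma pd_cmult:
  assumes "a differentiable (at x)"
  shows "pd i (\<lambda>y. c * a y) x = c * pd i a x"
  using pd_mult[of "\<lambda>_. c" x a i] assms by (simp add: pd_const)

lemma pd_eq_frechet_derivative:
  "h differentiable (at x) \<Longrightarrow> pd i h x = frechet_derivative h (at x) (axis i 1)"
  by (rule pd_eq_derivative) (simp add: frechet_derivative_works)

lemma pd_sum:
  assumes "finite S" "\<And>k. k \<in> S \<Longrightarrow> a k differentiable (at x)"
  shows "pd i (\<lambda>y. \<Sum>k\<in>S. a k y) x = (\<Sum>k\<in>S. pd i (a k) x)"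
proof -
  have "\<forall>k\<in>S. (a k has_derivative frechet_derivative (a k) (at x)) (at x)"
    using assms(2) frechet_derivative_works by blast
  then have "((\<lambda>y. \<Sum>k\<in>S. a k y) has_derivative (\<lambda>h. \<Sum>k\<in>S. frechet_derivative (a k) (at x) h)) (at x)"
    by (intro has_derivative_sum) blast
  then show ?thesis using pd_eq_frechet_derivative assms(2) by (simp add: pd_eq_derivative)
qed

lemma pd_inverse:
  assumes "h differentiable (at x)" "h x \<noteq> 0"
  shows "pd i (\<lambda>y. inverse (h y)) x = - (inverse (h x) * pd i h x * inverse (h x))"
proof -
  obtain D where d: "(h has_derivative D) (at x)" using assms unfolding differentiable_def by blast
  from pd_eq_derivative[OF Deriv.has_derivative_inverse[OF assms(2) d]] pd_eq_derivative[OF d]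
  show ?thesis by simp
qed

section \<open>Smooth functions\<close>

lemma diffs_snoc: "diffs (is @ [i]) h = diffs is (pd i h)"
  by (induction "is") auto

lemma diffs_cong_open:
  assumes "open U" "\<And>y. y \<in> U \<Longrightarrow> h y = h' y" "y \<in> U"
  shows "diffs is h y = diffs is h' y"
  using assms(3)
proof (induction "is" arbitrary: y)
  case Nil then show ?case using assms(2) by simp
next
  case (Cons i js)
  have "pd i (diffs js h) y = pd i (diffs js h') y"
    by (rule pd_cong_open[OF assms(1) Cons.prems]) (rule Cons.IH)
  then show ?case by simp
qed

lemma differentiable_on_cong:
  assumes "h differentiable_on S" "\<And>y. y \<in> S \<Longrightarrow> h y = h' y"
  shows "h' differentiable_on S"
  unfolding differentiable_on_def
proof
  fix x assume x: "x \<in> S"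
  obtain D where D: "(h has_derivative D) (at x within S)"
    using assms(1) x unfolding differentiable_on_def differentiable_def by blast
  have "(h' has_derivative D) (at x within S)"
    by (rule has_derivative_transform[OF x _ D]) (simp add: assms(2))
  then show "h' differentiable (at x within S)" unfolding differentiable_def by blast
qed

lemma smooth_on_cong_open:
  assumes "open U" "\<And>y. y \<in> U \<Longrightarrow> h y = h' y" "smooth_on U h"
  shows "smooth_on U h'"
  unfolding smooth_on_def
proof
  fix "is"
  have "diffs is h differentiable_on U" using assms(3) unfolding smooth_on_def by blast
  then show "diffs is h' differentiable_on U"
    by (rule differentiable_on_cong) (rule diffs_cong_open[OF assms(1,2)])
qed

lemma differentiable_on_open_at:
  "open U \<Longrightarrow> h differentiable_on U \<Longrightarrow> x \<in> U \<Longrightarrow> h differentiable (at x)"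
  using differentiable_on_eq_differentiable_at by blast

lemma smooth_on_imp_differentiable_at:
  assumes "open U" "smooth_on U h" "x \<in> U"
  shows "h differentiable (at x)"
proof -
  have "diffs [] h differentiable_on U" using assms(2) unfolding smooth_on_def by blast
  then show ?thesis using differentiable_on_open_at[OF assms(1) _ assms(3)] by simp
qed

lemma smooth_on_pd: "smooth_on U h \<Longrightarrow> smooth_on U (pd i h)"
  unfolding smooth_on_def by (metis diffs_snoc)

definition differentiable_upto :: "nat \<Rightarrow> (real^4) set \<Rightarrow> (real^4 \<Rightarrow> real) \<Rightarrow> bool" where
  "differentiable_upto n U h \<longleftrightarrow> (\<forall>is. length is \<le> n \<longrightarrow> diffs is h differentiable_on U)"

lemma smooth_on_iff_differentiable_upto: "smooth_on U h \<longleftrightarrow> (\<forall>n. differentiable_upto n U h)"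
  unfolding smooth_on_def differentiable_upto_def by blast

lemma differentiable_upto_0: "differentiable_upto 0 U h \<longleftrightarrow> h differentiable_on U"
  unfolding differentiable_upto_def by simp

lemma differentiable_upto_imp_differentiable_on:
  "differentiable_upto n U h \<Longrightarrow> h differentiable_on U"
  unfolding differentiable_upto_def by (metis diffs.simps(1) le0 list.size(3))

lemma differentiable_upto_Suc:
  "differentiable_upto (Suc n) U h \<longleftrightarrow> h differentiable_on U \<and> (\<forall>i. differentiable_upto n U (pd i h))"
proof
  assume a: "differentiable_upto (Suc n) U h"
  have "differentiable_upto n U (pd i h)" for i
    unfolding differentiable_upto_def
  proof (intro allI impI)
    fix js :: "4 list" assume "length js \<le> n"
    then have "length (js @ [i]) \<le> Suc n" by simp
    then show "diffs js (pd i h) differentiable_on U"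
      using a unfolding differentiable_upto_def diffs_snoc[symmetric] by blast
  qed
  then show "h differentiable_on U \<and> (\<forall>i. differentiable_upto n U (pd i h))"
    using a differentiable_upto_imp_differentiable_on by blast
next
  assume a: "h differentiable_on U \<and> (\<forall>i. differentiable_upto n U (pd i h))"
  show "differentiable_upto (Suc n) U h"
    unfolding differentiable_upto_def
  proof (intro allI impI)
    fix "is" :: "4 list" assume l: "length is \<le> Suc n"
    show "diffs is h differentiable_on U"
    proof (cases "is" rule: rev_exhaust)
      case Nil then show ?thesis using a by simp
    next
      case (snoc js i)
      then have "length js \<le> n" using l by simp
      then show ?thesis using a snoc unfolding differentiable_upto_def by (simp add: diffs_snoc)
    qed
  qed
qed

lemma differentiable_upto_cong_open:
  assumes "open U" "\<And>y. y \<in> U \<Longrightarrow> h y = h' y" "differentiable_upto n U h"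
  shows "differentiable_upto n U h'"
  unfolding differentiable_upto_def
proof (intro allI impI)
  fix "is" :: "4 list" assume "length is \<le> n"
  then have "diffs is h differentiable_on U" using assms(3) unfolding differentiable_upto_def by blast
  then show "diffs is h' differentiable_on U"
    by (rule differentiable_on_cong) (rule diffs_cong_open[OF assms(1,2)])
qed

lemma differentiable_upto_const: "differentiable_upto n U (\<lambda>y. c)"
proof (induction n arbitrary: c)
  case 0 then show ?case by (simp add: differentiable_upto_0)
next
  case (Suc n)
  have "pd i (\<lambda>y. c) = (\<lambda>y. 0)" for i by (simp add: fun_eq_iff pd_const)
  then show ?case using Suc by (simp add: differentiable_upto_Suc)
qed

lemma differentiable_upto_add:
  assumes "open U"
  shows "differentiable_upto n U a \<Longrightarrow> differentiable_upto n U b \<Longrightarrow> differentiable_upto n U (\<lambda>y. a y + b y)"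
proof (induction n arbitrary: a b)
  case 0 then show ?case by (simp add: differentiable_upto_0 differentiable_on_add)
next
  case (Suc n)
  have da: "a differentiable_on U" and db: "b differentiable_on U"
    using Suc.prems differentiable_upto_Suc by blast+
  have "differentiable_upto n U (pd i (\<lambda>y. a y + b y))" for i
  proof (rule differentiable_upto_cong_open[OF assms])
    have "differentiable_upto n U (pd i a)" "differentiable_upto n U (pd i b)"
      using Suc.prems unfolding differentiable_upto_Suc by blast+
    then show "differentiable_upto n U (\<lambda>y. pd i a y + pd i b y)"
      using Suc.IH by blast
    fix y assume "y \<in> U"
    then have "a differentiable (at y)" "b differentiable (at y)"
      using differentiable_on_open_at[OF assms] da db by blast+
    then show "pd i a y + pd i b y = pd i (\<lambda>y. a y + b y) y"
      by (simp add: pd_add)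
  qed
  then show ?case using differentiable_on_add[OF da db] unfolding differentiable_upto_Suc by blast
qed

lemma differentiable_upto_mult:
  assumes "open U"
  shows "differentiable_upto n U a \<Longrightarrow> differentiable_upto n U b \<Longrightarrow> differentiable_upto n U (\<lambda>y. a y * b y)"
proof (induction n arbitrary: a b)
  case 0 then show ?case by (simp add: differentiable_upto_0 differentiable_on_mult)
next
  case (Suc n)
  have da: "a differentiable_on U" and db: "b differentiable_on U"
    using Suc.prems differentiable_upto_Suc by blast+
  have an: "differentiable_upto n U a" and bn: "differentiable_upto n U b"
    using Suc.prems unfolding differentiable_upto_def by auto
  have "differentiable_upto n U (pd i (\<lambda>y. a y * b y))" for i
  proof (rule differentiable_upto_cong_open[OF assms])
    have "differentiable_upto n U (pd i a)" "differentiable_upto n U (pd i b)"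
      using Suc.prems unfolding differentiable_upto_Suc by blast+
    then have "differentiable_upto n U (\<lambda>y. pd i a y * b y)" "differentiable_upto n U (\<lambda>y. a y * pd i b y)"
      using Suc.IH an bn by blast+
    then show "differentiable_upto n U (\<lambda>y. pd i a y * b y + a y * pd i b y)"
      using differentiable_upto_add[OF assms] by blast
    fix y assume "y \<in> U"
    then have "a differentiable (at y)" "b differentiable (at y)"
      using differentiable_on_open_at[OF assms] da db by blast+
    then show "pd i a y * b y + a y * pd i b y = pd i (\<lambda>y. a y * b y) y"
      by (simp add: pd_mult)
  qed
  then show ?case using differentiable_on_mult[OF da db] unfolding differentiable_upto_Suc by blast
qed

lemma differentiable_upto_inverse:
  assumes "open U" "smooth_on U h" "\<And>y. y \<in> U \<Longrightarrow> h y \<noteq> 0"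
  shows "differentiable_upto n U (\<lambda>y. inverse (h y))"
proof (induction n)
  case 0
  have "(\<lambda>y. inverse (h y)) differentiable (at y)" if "y \<in> U" for y
    using smooth_on_imp_differentiable_at[OF assms(1,2) that] assms(3)[OF that]
    by (auto intro: differentiable_compose[of inverse] simp: o_def)
  then show ?case
    unfolding differentiable_upto_0 using differentiable_on_eq_differentiable_at[OF assms(1)] by blast
next
  case (Suc n)
  have "differentiable_upto n U (pd i (\<lambda>y. inverse (h y)))" for i
  proof (rule differentiable_upto_cong_open[OF assms(1)])
    have "differentiable_upto n U (pd i h)"
      using smooth_on_pd[OF assms(2)] smooth_on_iff_differentiable_upto by blast
    then show "differentiable_upto n U (\<lambda>y. (-1) * pd i h y * inverse (h y) * inverse (h y))"
      by (intro differentiable_upto_mult[OF assms(1)] differentiable_upto_const Suc.IH)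
    fix y assume y: "y \<in> U"
    show "(-1) * pd i h y * inverse (h y) * inverse (h y) = pd i (\<lambda>y. inverse (h y)) y"
      using pd_inverse[OF smooth_on_imp_differentiable_at[OF assms(1,2) y] assms(3)[OF y]] by simp
  qed
  then show ?case
    using Suc.IH differentiable_upto_imp_differentiable_on unfolding differentiable_upto_Suc by blast
qed

lemma smooth_on_const: "smooth_on U (\<lambda>y. c)"
  using differentiable_upto_const smooth_on_iff_differentiable_upto by blast

lemma smooth_on_add: "open U \<Longrightarrow> smooth_on U a \<Longrightarrow> smooth_on U b \<Longrightarrow> smooth_on U (\<lambda>y. a y + b y)"
  unfolding smooth_on_iff_differentiable_upto by (intro allI differentiable_upto_add) auto

lemma smooth_on_mult: "open U \<Longrightarrow> smooth_on U a \<Longrightarrow> smooth_on U b \<Longrightarrow> smooth_on U (\<lambda>y. a y * b y)"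
  unfolding smooth_on_iff_differentiable_upto by (intro allI differentiable_upto_mult) auto

lemma smooth_on_diff:
  assumes "open U" "smooth_on U a" "smooth_on U b"
  shows "smooth_on U (\<lambda>y. a y - b y)"
proof -
  have "smooth_on U (\<lambda>y. a y + (-1) * b y)"
    by (intro smooth_on_add smooth_on_mult smooth_on_const assms)
  then show ?thesis by simp
qed

lemma smooth_on_sum:
  assumes "open U" "finite S" "\<And>k. k \<in> S \<Longrightarrow> smooth_on U (a k)"
  shows "smooth_on U (\<lambda>y. \<Sum>k\<in>S. a k y)"
  using assms(2,3) by (induction S rule: finite_induct) (auto intro: smooth_on_add[OF assms(1)] smooth_on_const)

lemma smooth_on_prod:
  assumes "open U" "finite S" "\<And>k. k \<in> S \<Longrightarrow> smooth_on U (a k)"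
  shows "smooth_on U (\<lambda>y. \<Prod>k\<in>S. a k y)"
  using assms(2,3) by (induction S rule: finite_induct) (auto intro: smooth_on_mult[OF assms(1)] smooth_on_const)

lemma smooth_on_inverse:
  assumes "open U" "smooth_on U h" "\<And>y. y \<in> U \<Longrightarrow> h y \<noteq> 0"
  shows "smooth_on U (\<lambda>y. inverse (h y))"
  unfolding smooth_on_iff_differentiable_upto by (intro allI differentiable_upto_inverse assms)

lemma smooth_on_det:
  assumes "open U" "\<And>i j. smooth_on U (\<lambda>y. F y i j)"
  shows "smooth_on U (\<lambda>y. det (\<chi> i j. F y i j :: real^4^4))"
proof -
  have fin: "finite {p. p permutes (UNIV::4 set)}" by (simp add: finite_permutations)
  have "smooth_on U (\<lambda>y. \<Sum>p\<in>{p. p permutes (UNIV::4 set)}. of_int (sign p) * (\<Prod>i\<in>UNIV. F y i (p i)))"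
    apply (rule smooth_on_sum[OF assms(1) fin])
    apply (rule smooth_on_mult[OF assms(1) smooth_on_const])
    apply (rule smooth_on_prod[OF assms(1)])
    apply simp
    apply (rule assms(2))
    done
  then show ?thesis unfolding det_def by simp
qed

section \<open>Symmetry of second partial derivatives\<close>

lemma dist_add_axes:
  fixes x :: "real^'n"
  shows "dist (x + s *\<^sub>R axis i 1 + \<tau> *\<^sub>R axis j 1) x \<le> \<bar>s\<bar> + \<bar>\<tau>\<bar>"
proof -
  have "dist (x + s *\<^sub>R axis i 1 + \<tau> *\<^sub>R axis j 1) x = norm (s *\<^sub>R axis i (1::real) + \<tau> *\<^sub>R axis j 1)"
    by (simp add: dist_norm)
  also have "\<dots> \<le> norm (s *\<^sub>R axis i (1::real)) + norm (\<tau> *\<^sub>R axis j (1::real))"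
    by (rule norm_triangle_ineq)
  finally show ?thesis by simp
qed

lemma second_difference_mean_value:
  fixes h :: "real^4 \<Rightarrow> real"
  assumes U: "open U" "smooth_on U h" "ball x r \<subseteq> U" and t: "0 < t" "2*t < r"
  shows "\<exists>p. dist p x < 2*t \<and>
    h (x + t *\<^sub>R axis i 1 + t *\<^sub>R axis j 1) - h (x + t *\<^sub>R axis i 1) - h (x + t *\<^sub>R axis j 1) + h x
      = t^2 * pd j (pd i h) p"
proof -
  define ei :: "real^4" where "ei = axis i 1"
  define ej :: "real^4" where "ej = axis j 1"
  have mem: "x + s *\<^sub>R ei + \<tau> *\<^sub>R ej \<in> U" if "0 \<le> s" "s \<le> t" "0 \<le> \<tau>" "\<tau> \<le> t" for s \<tau>
  proof -
    have "dist (x + s *\<^sub>R ei + \<tau> *\<^sub>R ej) x < r"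
      using dist_add_axes[of x s i \<tau> j] abs_of_nonneg[OF that(1)] abs_of_nonneg[OF that(3)] that t
      unfolding ei_def ej_def by linarith
    then show ?thesis using U(3) by (auto simp: dist_commute)
  qed
  have dh: "h differentiable (at z)" if "z \<in> U" for z
    using smooth_on_imp_differentiable_at[OF U(1,2) that] .
  have dph: "pd i h differentiable (at z)" if "z \<in> U" for z
    using smooth_on_imp_differentiable_at[OF U(1) smooth_on_pd[OF U(2)] that] .
  define \<phi> where "\<phi> \<sigma> = h ((x + t *\<^sub>R ej) + \<sigma> *\<^sub>R ei) - h (x + \<sigma> *\<^sub>R ei)" for \<sigma>
  have "DERIV \<phi> \<sigma> :> pd i h ((x + t *\<^sub>R ej) + \<sigma> *\<^sub>R ei) - pd i h (x + \<sigma> *\<^sub>R ei)"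
    if "0 \<le> \<sigma>" "\<sigma> \<le> t" for \<sigma>
  proof -
    have "(x + t *\<^sub>R ej) + \<sigma> *\<^sub>R ei \<in> U" "x + \<sigma> *\<^sub>R ei \<in> U"
      using mem[of \<sigma> t] mem[of \<sigma> 0] that t by (simp_all add: algebra_simps)
    then show ?thesis unfolding \<phi>_def[abs_def] ei_def
      by (intro DERIV_diff pd_along_line dh) (simp_all add: ei_def)
  qed
  then obtain \<xi> where xi: "0 < \<xi>" "\<xi> < t"
    "\<phi> t - \<phi> 0 = (t - 0) * (pd i h ((x + t *\<^sub>R ej) + \<xi> *\<^sub>R ei) - pd i h (x + \<xi> *\<^sub>R ei))"
    using MVT2[OF t(1), of \<phi> "\<lambda>\<sigma>. pd i h ((x + t *\<^sub>R ej) + \<sigma> *\<^sub>R ei) - pd i h (x + \<sigma> *\<^sub>R ei)"]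
    by auto
  define \<psi> where "\<psi> \<tau> = pd i h ((x + \<xi> *\<^sub>R ei) + \<tau> *\<^sub>R ej)" for \<tau>
  have "DERIV \<psi> \<tau> :> pd j (pd i h) ((x + \<xi> *\<^sub>R ei) + \<tau> *\<^sub>R ej)" if "0 \<le> \<tau>" "\<tau> \<le> t" for \<tau>
  proof -
    have "(x + \<xi> *\<^sub>R ei) + \<tau> *\<^sub>R ej \<in> U" using mem[of \<xi> \<tau>] that xi by simp
    then show ?thesis unfolding \<psi>_def[abs_def] ej_def
      by (intro pd_along_line dph) (simp add: ej_def)
  qed
  then obtain \<eta> where eta: "0 < \<eta>" "\<eta> < t"
    "\<psi> t - \<psi> 0 = (t - 0) * pd j (pd i h) ((x + \<xi> *\<^sub>R ei) + \<eta> *\<^sub>R ej)"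
    using MVT2[OF t(1), of \<psi> "\<lambda>\<tau>. pd j (pd i h) ((x + \<xi> *\<^sub>R ei) + \<tau> *\<^sub>R ej)"] by auto
  define p where "p = (x + \<xi> *\<^sub>R ei) + \<eta> *\<^sub>R ej"
  have dp: "dist p x < 2 * t"
    using dist_add_axes[of x \<xi> i \<eta> j] abs_of_pos[OF xi(1)] abs_of_pos[OF eta(1)] xi eta
    unfolding p_def ei_def ej_def by linarith
  have "h (x + t *\<^sub>R ei + t *\<^sub>R ej) - h (x + t *\<^sub>R ei) - h (x + t *\<^sub>R ej) + h x = \<phi> t - \<phi> 0"
    unfolding \<phi>_def by (simp add: algebra_simps)
  also have "\<dots> = t * (\<psi> t - \<psi> 0)" using xi(3) unfolding \<psi>_def by (simp add: algebra_simps)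
  also have "\<dots> = t^2 * pd j (pd i h) p" using eta(3) by (simp add: p_def power2_eq_square)
  finally show ?thesis using dp unfolding ei_def ej_def by blast
qed

text \<open>Schwarz: both mixed partials at \<open>x\<close> are limits of the same second difference quotient.\<close>

lemma pd_commute:
  fixes h :: "real^4 \<Rightarrow> real"
  assumes U: "open U" "smooth_on U h" "x \<in> U"
  shows "pd i (pd j h) x = pd j (pd i h) x"
proof (rule ccontr)
  assume ne: "pd i (pd j h) x \<noteq> pd j (pd i h) x"
  define a where "a = pd j (pd i h)"
  define b where "b = pd i (pd j h)"
  define \<epsilon> where "\<epsilon> = \<bar>a x - b x\<bar> / 2"
  have ep: "\<epsilon> > 0" using ne by (simp add: \<epsilon>_def a_def b_def)
  have "continuous (at x) a" "continuous (at x) b" unfolding a_def b_def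
    by (rule differentiable_imp_continuous_within,
        rule smooth_on_imp_differentiable_at[OF U(1) smooth_on_pd[OF smooth_on_pd[OF U(2)]] U(3)])+
  then obtain da db where da: "da > 0" "\<And>y. dist y x < da \<Longrightarrow> dist (a y) (a x) < \<epsilon>"
    and db: "db > 0" "\<And>y. dist y x < db \<Longrightarrow> dist (b y) (b x) < \<epsilon>"
    using ep unfolding continuous_at_eps_delta by blast
  obtain r where r: "r > 0" "ball x r \<subseteq> U" using U(1,3) open_contains_ball by blast
  define t where "t = min (min da db) r / 3"
  have t: "0 < t" "2*t < r" "2*t < da" "2*t < db" using da db r by (auto simp: t_def)
  obtain p1 where p1: "dist p1 x < 2*t"
    "h (x + t *\<^sub>R axis i 1 + t *\<^sub>R axis j 1) - h (x + t *\<^sub>R axis i 1) - h (x + t *\<^sub>R axis j 1) + h x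
      = t^2 * a p1"
    using second_difference_mean_value[OF U(1,2) r(2) t(1,2), of i j] unfolding a_def by blast
  obtain p2 where p2: "dist p2 x < 2*t"
    "h (x + t *\<^sub>R axis j 1 + t *\<^sub>R axis i 1) - h (x + t *\<^sub>R axis j 1) - h (x + t *\<^sub>R axis i 1) + h x
      = t^2 * b p2"
    using second_difference_mean_value[OF U(1,2) r(2) t(1,2), of j i] unfolding b_def by blast
  have "x + t *\<^sub>R axis j 1 + t *\<^sub>R axis i 1 = x + t *\<^sub>R axis i 1 + t *\<^sub>R axis j 1"
    by (simp add: algebra_simps)
  then have "h (x + t *\<^sub>R axis j 1 + t *\<^sub>R axis i 1) = h (x + t *\<^sub>R axis i 1 + t *\<^sub>R axis j 1)"
    by (rule arg_cong)
  then have "t^2 * a p1 = t^2 * b p2" using p1(2) p2(2) by linarith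
  then have eq: "a p1 = b p2" using t(1) by simp
  have "dist (a p1) (a x) < \<epsilon>" "dist (b p2) (b x) < \<epsilon>" using da(2) db(2) p1(1) p2(1) t by auto
  then have "\<bar>a x - b x\<bar> < 2 * \<epsilon>" using eq by (simp add: dist_real_def)
  then show False by (simp add: \<epsilon>_def)
qed

section \<open>Pointwise tensor identities\<close>

text \<open>
  The curvature computations at a point are reduced to identities between arrays indexed by \<open>4\<close>:
  \<open>gg\<close> and \<open>G\<close> stand for the metric and its inverse, \<open>Gm m i j\<close> for \<open>\<Gamma>\<^sup>m\<^sub>i\<^sub>j\<close>,
  \<open>df\<close> and \<open>v\<close> for \<open>df\<close> and \<open>\<nabla>f\<close>, \<open>H\<close> and \<open>Rc\<close> for \<open>Hes\<^sub>f\<close> and \<open>\<rho>\<close>, and a leading \<open>d\<close>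
  marks the array of first partial derivatives of the quantity, supplied as an independent argument.
\<close>

type_synonym tensor1 = "4 \<Rightarrow> real"
type_synonym tensor2 = "4 \<Rightarrow> 4 \<Rightarrow> real"
type_synonym tensor3 = "4 \<Rightarrow> 4 \<Rightarrow> 4 \<Rightarrow> real"
type_synonym tensor4 = "4 \<Rightarrow> 4 \<Rightarrow> 4 \<Rightarrow> 4 \<Rightarrow> real"

lemma mult_if_zero:
  fixes a b :: "'a::mult_zero"
  shows "a * (if P then b else 0) = (if P then a * b else 0)"
    and "(if P then b else 0) * a = (if P then b * a else 0)"
  by simp_all

lemmas delta_simps = mult_if_zero sum.delta sum.delta'

lemma inverse_metric_derivative:
  fixes gg G :: tensor2 and Gm dg dG :: tensor3
  assumes GL: "\<And>i k. (\<Sum>j\<in>UNIV. G i j * gg j k) = (if i = k then 1 else 0)"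
    and GR: "\<And>i k. (\<Sum>j\<in>UNIV. gg i j * G j k) = (if i = k then 1 else 0)"
    and D: "\<And>a c. (\<Sum>b\<in>UNIV. dg i a b * G b c + gg a b * dG i b c) = 0"
    and MC: "\<And>a b. dg i a b = (\<Sum>m\<in>UNIV. Gm m i a * gg m b + Gm m i b * gg a m)"
  shows "dG i d c = - (\<Sum>a\<in>UNIV. G d a * Gm c i a + Gm d i a * G a c)"
proof -
  have "(\<Sum>a\<in>UNIV. G d a * (\<Sum>b\<in>UNIV. gg a b * dG i b c))
      = (\<Sum>b\<in>UNIV. (\<Sum>a\<in>UNIV. G d a * gg a b) * dG i b c)"
    unfolding UNIV_4 by (simp add: algebra_simps)
  also have "\<dots> = dG i d c" unfolding GL by (simp add: delta_simps)
  finally have s1: "dG i d c = (\<Sum>a\<in>UNIV. G d a * (\<Sum>b\<in>UNIV. gg a b * dG i b c))" by simp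
  have s2: "(\<Sum>b\<in>UNIV. gg a b * dG i b c) = - (\<Sum>b\<in>UNIV. dg i a b * G b c)" for a
    using D[of a c] unfolding sum.distrib by linarith
  have "(\<Sum>a\<in>UNIV. G d a * (\<Sum>b\<in>UNIV. dg i a b * G b c))
      = (\<Sum>a\<in>UNIV. \<Sum>m\<in>UNIV. G d a * Gm m i a * (\<Sum>b\<in>UNIV. gg m b * G b c))
        + (\<Sum>b\<in>UNIV. \<Sum>m\<in>UNIV. (\<Sum>a\<in>UNIV. G d a * gg a m) * Gm m i b * G b c)"
    unfolding MC UNIV_4 by (simp add: algebra_simps)
  also have "\<dots> = (\<Sum>a\<in>UNIV. G d a * Gm c i a) + (\<Sum>b\<in>UNIV. Gm d i b * G b c)"
    unfolding GL GR by (simp add: delta_simps)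
  finally have s3: "(\<Sum>a\<in>UNIV. G d a * (\<Sum>b\<in>UNIV. dg i a b * G b c))
      = (\<Sum>a\<in>UNIV. G d a * Gm c i a + Gm d i a * G a c)"
    by (simp add: sum.distrib)
  show ?thesis unfolding s1 s2 using s3 by (simp add: sum_negf)
qed

lemma lower_raise_scaled:
  fixes G gg :: tensor2 and T :: tensor1
  assumes GL: "\<And>l j. (\<Sum>m\<in>UNIV. G l m * gg m j) = (if l = j then 1 else 0)"
    and Gs: "\<And>a b. G a b = G b a"
  shows "(\<Sum>m\<in>UNIV. (c * (\<Sum>l\<in>UNIV. G m l * T l)) * gg m j) = c * T j"
proof -
  have "(\<Sum>m\<in>UNIV. (c * (\<Sum>l\<in>UNIV. G m l * T l)) * gg m j)
      = c * (\<Sum>l\<in>UNIV. T l * (\<Sum>m\<in>UNIV. G l m * gg m j))"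
    unfolding UNIV_4 by (simp add: algebra_simps Gs)
  also have "\<dots> = c * T j" unfolding GL by (simp add: delta_simps)
  finally show ?thesis .
qed

lemma lower_raise:
  fixes G gg :: tensor2 and df :: tensor1
  assumes GR: "\<And>i k. (\<Sum>j\<in>UNIV. gg i j * G j k) = (if i = k then 1 else 0)"
  shows "(\<Sum>l\<in>UNIV. gg p l * (\<Sum>j\<in>UNIV. G l j * df j)) = df p"
proof -
  have "(\<Sum>l\<in>UNIV. gg p l * (\<Sum>j\<in>UNIV. G l j * df j)) = (\<Sum>j\<in>UNIV. (\<Sum>l\<in>UNIV. gg p l * G l j) * df j)"
    unfolding UNIV_4 by (simp add: algebra_simps)
  also have "\<dots> = df p" unfolding GR by (simp add: delta_simps)
  finally show ?thesis .
qed

lemma quadratic_form_lower: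
  fixes gg :: tensor2 and v df :: tensor1
  assumes "\<And>p. (\<Sum>l\<in>UNIV. gg p l * v l) = df p"
  shows "(\<Sum>i\<in>UNIV. \<Sum>j\<in>UNIV. gg i j * v i * v j) = (\<Sum>i\<in>UNIV. df i * v i)"
proof -
  have "(\<Sum>i\<in>UNIV. \<Sum>j\<in>UNIV. gg i j * v i * v j) = (\<Sum>i\<in>UNIV. (\<Sum>j\<in>UNIV. gg i j * v j) * v i)"
    unfolding UNIV_4 by (simp add: algebra_simps)
  then show ?thesis using assms by simp
qed

lemma trace_inverse_metric:
  fixes gg G :: tensor2
  assumes GL: "\<And>i k. (\<Sum>j\<in>UNIV. G i j * gg j k) = (if i = k then 1 else 0)"
    and ggs: "\<And>a b. gg a b = gg b a"
  shows "(\<Sum>j\<in>UNIV. \<Sum>k\<in>UNIV. G j k * gg j k) = 4"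
proof -
  have "(\<Sum>j\<in>UNIV. \<Sum>k\<in>UNIV. G j k * gg j k) = (\<Sum>j\<in>UNIV. \<Sum>k\<in>UNIV. G j k * gg k j)"
    by (simp add: ggs)
  also have "\<dots> = (\<Sum>j\<in>(UNIV::4 set). (1::real))" unfolding GL by simp
  finally show ?thesis by simp
qed

lemma contract_inverse_metric:
  fixes gg G :: tensor2 and X :: tensor1
  assumes GR: "\<And>i k. (\<Sum>j\<in>UNIV. gg i j * G j k) = (if i = k then 1 else 0)"
    and Gs: "\<And>a b. G a b = G b a"
  shows "(\<Sum>j\<in>UNIV. \<Sum>k\<in>UNIV. G j k * X j * gg i k) = X i"
proof -
  have "(\<Sum>j\<in>UNIV. \<Sum>k\<in>UNIV. G j k * X j * gg i k) = (\<Sum>j\<in>UNIV. X j * (\<Sum>k\<in>UNIV. gg i k * G k j))"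
    unfolding UNIV_4 by (simp add: algebra_simps Gs)
  also have "\<dots> = X i" unfolding GR by (simp add: delta_simps)
  finally show ?thesis .
qed

lemma hessian_null_gradient:
  fixes G H ddf :: tensor2 and Gm dG :: tensor3 and df :: tensor1
  assumes Gs: "\<And>a b. G a b = G b a"
    and dG: "\<And>a b. dG i a b = - (\<Sum>c\<in>UNIV. G a c * Gm b i c + Gm a i c * G c b)"
    and ddf: "\<And>a. ddf i a = H i a + (\<Sum>m\<in>UNIV. Gm m i a * df m)"
    and D: "(\<Sum>a\<in>UNIV. \<Sum>b\<in>UNIV. dG i a b * df a * df b + G a b * ddf i a * df b + G a b * df a * ddf i b) = 0"
  shows "(\<Sum>a\<in>UNIV. H i a * (\<Sum>b\<in>UNIV. G a b * df b)) = 0"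
proof -
  have "(\<Sum>a\<in>UNIV. \<Sum>b\<in>UNIV. dG i a b * df a * df b + G a b * ddf i a * df b + G a b * df a * ddf i b)
     = 2 * (\<Sum>a\<in>UNIV. H i a * (\<Sum>b\<in>UNIV. G a b * df b))"
    unfolding dG ddf UNIV_4 by (simp add: algebra_simps Gs)
  then show ?thesis using D by simp
qed

lemma ricci_gradient_expansion:
  fixes gg Rc H :: tensor2 and df v :: tensor1
  assumes lower: "\<And>p. (\<Sum>l\<in>UNIV. gg p l * v l) = df p"
    and N: "(\<Sum>k\<in>UNIV. df k * v k) = 0"
    and HV: "(\<Sum>a\<in>UNIV. H i a * v a) = 0"
    and qE: "\<And>a b. Rc a b = lam * gg a b - H a b + mu * df a * df b"
  shows "(\<Sum>a\<in>UNIV. Rc i a * v a) = lam * df i"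
proof -
  have "(\<Sum>a\<in>UNIV. Rc i a * v a) = lam * (\<Sum>a\<in>UNIV. gg i a * v a) - (\<Sum>a\<in>UNIV. H i a * v a)
      + mu * df i * (\<Sum>k\<in>UNIV. df k * v k)"
    unfolding qE UNIV_4 by (simp add: algebra_simps)
  then show ?thesis using lower HV N by simp
qed

lemma ricci_identity_expansion:
  fixes dH dddf Gm :: tensor3 and dGm :: tensor4 and ddf H :: tensor2 and df :: tensor1
  assumes dH: "\<And>a j k. dH a j k = dddf a j k - (\<Sum>m\<in>UNIV. dGm a m j k * df m + Gm m j k * ddf a m)"
    and ddf: "\<And>a m. ddf a m = H a m + (\<Sum>p\<in>UNIV. Gm p a m * df p)"
    and dddf: "\<And>a b k. dddf a b k = dddf b a k"
    and Gms: "\<And>m a b. Gm m a b = Gm m b a"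
  shows "(dH i j k - (\<Sum>m\<in>UNIV. Gm m i j * H m k + Gm m i k * H j m))
       - (dH j i k - (\<Sum>m\<in>UNIV. Gm m j i * H m k + Gm m j k * H i m))
       = - (\<Sum>p\<in>UNIV. (dGm i p j k - dGm j p i k
            + (\<Sum>m\<in>UNIV. Gm m j k * Gm p i m - Gm m i k * Gm p j m)) * df p)"
  unfolding dH ddf UNIV_4 by (simp add: algebra_simps dddf[of j i k] Gms[of _ j i])

lemma covariant_ricci_expansion:
  fixes gg Rc H ddf dRc :: tensor2 and dg dH Gm :: tensor3 and df dlam :: tensor1 and lam mu :: real
  assumes dRc: "\<And>j k. dRc j k = dlam i * gg j k + lam * dg i j k - dH i j k + mu * (ddf i j * df k + df j * ddf i k)"
    and MC: "\<And>j k. dg i j k = (\<Sum>m\<in>UNIV. Gm m i j * gg m k + Gm m i k * gg j m)"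
    and ddf: "\<And>a m. ddf a m = H a m + (\<Sum>p\<in>UNIV. Gm p a m * df p)"
    and Rc: "\<And>a b. Rc a b = lam * gg a b - H a b + mu * df a * df b"
  shows "dRc j k - (\<Sum>m\<in>UNIV. Gm m i j * Rc m k + Gm m i k * Rc j m)
       = dlam i * gg j k - (dH i j k - (\<Sum>m\<in>UNIV. Gm m i j * H m k + Gm m i k * H j m))
         + mu * (H i j * df k + df j * H i k)"
  unfolding dRc MC ddf Rc UNIV_4 by (simp add: algebra_simps)

lemma cotton_weyl_identity:
  fixes gg Rc H :: tensor2 and df dtau dlam :: tensor1 and Rv C :: tensor3 and lam mu tau :: real
  assumes qE: "\<And>i j. H i j = lam * gg i j - Rc i j + mu * df i * df j"
    and W: "\<And>i j k. Rv i j k + tau/6 * (gg i k * df j - df i * gg j k)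
              + 1/2 * (lam * df i * gg j k - Rc i k * df j + Rc j k * df i - lam * df j * gg i k) = 0"
    and dv: "\<And>i j k. -1/2 * C i j k + 1/12 * (dtau i * gg j k - dtau j * gg i k) = 0"
    and cot: "\<And>i j k. C i j k = dlam i * gg j k - dlam j * gg i k - Rv i j k + mu * (df j * H i k - df i * H j k)"
  shows "(dtau i / 6 - dlam i) * gg j k - (dtau j / 6 - dlam j) * gg i k
     = (- tau/6 + lam/2 - mu * lam) * (df i * gg j k - df j * gg i k)
       + (1/2 + mu) * (df i * Rc j k - df j * Rc i k)"
proof -
  have Rv: "Rv i j k = - (tau/6 * (gg i k * df j - df i * gg j k)
            + 1/2 * (lam * df i * gg j k - Rc i k * df j + Rc j k * df i - lam * df j * gg i k))"
    using W[of i j k] by linarith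
  have "-1/2 * (dlam i * gg j k - dlam j * gg i k - Rv i j k + mu * (df j * H i k - df i * H j k))
        + 1/12 * (dtau i * gg j k - dtau j * gg i k) = 0"
    using dv[of i j k] cot[of i j k] by simp
  then have "-1/2 * (dlam i * gg j k - dlam j * gg i k + (tau/6 * (gg i k * df j - df i * gg j k)
            + 1/2 * (lam * df i * gg j k - Rc i k * df j + Rc j k * df i - lam * df j * gg i k))
            + mu * (df j * (lam * gg i k - Rc i k + mu * df i * df k)
                    - df i * (lam * gg j k - Rc j k + mu * df j * df k)))
        + 1/12 * (dtau i * gg j k - dtau j * gg i k) = 0"
    unfolding Rv qE by simp
  then show ?thesis by (simp add: algebra_simps; linarith)
qed

text \<open>Tracing the identity over j, k determines u; this is where \<open>\<beta> \<noteq> 0\<close>, i.e. \<open>\<mu> \<noteq> -1/2\<close>, enters.\<close>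

lemma ricci_wedge_gradient:
  fixes gg G Rc :: tensor2 and df v u :: tensor1 and lam tau \<alpha> \<beta> :: real
  assumes GL: "\<And>i k. (\<Sum>j\<in>UNIV. G i j * gg j k) = (if i = k then 1 else 0)"
    and GR: "\<And>i k. (\<Sum>j\<in>UNIV. gg i j * G j k) = (if i = k then 1 else 0)"
    and Gs: "\<And>a b. G a b = G b a" and ggs: "\<And>a b. gg a b = gg b a"
    and v: "\<And>k. v k = (\<Sum>j\<in>UNIV. G k j * df j)"
    and RcV: "\<And>i. (\<Sum>a\<in>UNIV. Rc i a * v a) = lam * df i"
    and tau: "tau = (\<Sum>j\<in>UNIV. \<Sum>k\<in>UNIV. G j k * Rc j k)"
    and E: "\<And>i j k. u i * gg j k - u j * gg i k
              = \<alpha> * (df i * gg j k - df j * gg i k) + \<beta> * (df i * Rc j k - df j * Rc i k)"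
    and \<beta>: "\<beta> \<noteq> 0"
  shows "df i * Rc j k - df j * Rc i k = (tau - lam) / 3 * (df i * gg j k - df j * gg i k)"
proof -
  have u: "u a = (\<alpha> + \<beta> * ((tau - lam) / 3)) * df a" for a
  proof -
    have "(\<Sum>j\<in>UNIV. \<Sum>k\<in>UNIV. G j k * (u a * gg j k - u j * gg a k))
        = u a * (\<Sum>j\<in>UNIV. \<Sum>k\<in>UNIV. G j k * gg j k) - (\<Sum>j\<in>UNIV. \<Sum>k\<in>UNIV. G j k * u j * gg a k)"
      unfolding UNIV_4 by (simp add: algebra_simps)
    moreover have "(\<Sum>j\<in>UNIV. \<Sum>k\<in>UNIV. G j k * (\<alpha> * (df a * gg j k - df j * gg a k) + \<beta> * (df a * Rc j k - df j * Rc a k)))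
        = \<alpha> * (df a * (\<Sum>j\<in>UNIV. \<Sum>k\<in>UNIV. G j k * gg j k) - (\<Sum>j\<in>UNIV. \<Sum>k\<in>UNIV. G j k * df j * gg a k))
          + \<beta> * (df a * (\<Sum>j\<in>UNIV. \<Sum>k\<in>UNIV. G j k * Rc j k) - (\<Sum>k\<in>UNIV. Rc a k * v k))"
      unfolding v UNIV_4 by (simp add: algebra_simps Gs)
    ultimately have "u a * 4 - u a = \<alpha> * (df a * 4 - df a) + \<beta> * (df a * tau - lam * df a)"
      using E unfolding trace_inverse_metric[OF GL ggs] contract_inverse_metric[OF GR Gs] RcV tau[symmetric]
      by simp
    then show ?thesis by (simp add: field_simps)
  qed
  define A where "A = df i * gg j k - df j * gg i k"
  define B where "B = df i * Rc j k - df j * Rc i k"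
  have "u i * gg j k - u j * gg i k = (\<alpha> + \<beta> * ((tau - lam) / 3)) * A"
    unfolding u A_def by (simp add: algebra_simps)
  then have "\<alpha> * A + \<beta> * B = \<alpha> * A + \<beta> * ((tau - lam) / 3) * A"
    using E[of i j k] unfolding A_def[symmetric] B_def[symmetric] by (simp add: algebra_simps)
  then have "\<beta> * B = \<beta> * ((tau - lam) / 3 * A)" by simp
  then show ?thesis using \<beta> unfolding A_def B_def by simp
qed

lemma ricci_rank_one_from_wedge:
  fixes gg Rc :: tensor2 and df v :: tensor1 and lam \<kappa> :: real
  assumes ggs: "\<And>a b. gg a b = gg b a" and Rcs: "\<And>a b. Rc a b = Rc b a"
    and lower: "\<And>p. (\<Sum>l\<in>UNIV. gg p l * v l) = df p"
    and N: "(\<Sum>k\<in>UNIV. df k * v k) = 0"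
    and RcV: "\<And>i. (\<Sum>a\<in>UNIV. Rc i a * v a) = lam * df i"
    and E: "\<And>i j k. df i * Rc j k - df j * Rc i k = \<kappa> * (df i * gg j k - df j * gg i k)"
    and nz: "df i0 \<noteq> 0"
  shows "\<kappa> = lam" and "\<exists>\<phi>. \<forall>j k. Rc j k = lam * gg j k + \<phi> * df j * df k"
proof -
  define s where "s k = (Rc i0 k - \<kappa> * gg i0 k) / df i0" for k
  have Rc: "Rc j k = \<kappa> * gg j k + df j * s k" for j k
    using E[of i0 j k] nz unfolding s_def by (simp add: field_simps)
  have "(\<Sum>a\<in>UNIV. Rc a i0 * v a) = \<kappa> * (\<Sum>a\<in>UNIV. gg i0 a * v a) + s i0 * (\<Sum>a\<in>UNIV. df a * v a)"
    unfolding Rc UNIV_4 by (simp add: algebra_simps ggs)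
  moreover have "(\<Sum>a\<in>UNIV. Rc a i0 * v a) = lam * df i0" using RcV[of i0] by (simp add: Rcs)
  ultimately have "lam * df i0 = \<kappa> * df i0" using lower N by simp
  then show \<kappa>: "\<kappa> = lam" using nz by simp
  have "df i0 * s k = df k * s i0" for k using Rc[of i0 k] Rc[of k i0] Rcs[of i0 k] ggs[of i0 k] by simp
  then have "s k = s i0 / df i0 * df k" for k using nz by (simp add: field_simps)
  then show "\<exists>\<phi>. \<forall>j k. Rc j k = lam * gg j k + \<phi> * df j * df k"
    using Rc \<kappa> by (metis mult.assoc mult.left_commute)
qed

lemma weyl_divergence_consequences:
  fixes gg G Rc H :: tensor2 and df v dtau dlam :: tensor1 and Rv C :: tensor3 and lam mu tau :: real
  assumes GL: "\<And>i k. (\<Sum>j\<in>UNIV. G i j * gg j k) = (if i = k then 1 else 0)"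
    and GR: "\<And>i k. (\<Sum>j\<in>UNIV. gg i j * G j k) = (if i = k then 1 else 0)"
    and Gs: "\<And>a b. G a b = G b a" and ggs: "\<And>a b. gg a b = gg b a"
    and v: "\<And>k. v k = (\<Sum>j\<in>UNIV. G k j * df j)"
    and N: "(\<Sum>k\<in>UNIV. df k * v k) = 0"
    and qE: "\<And>i j. H i j = lam * gg i j - Rc i j + mu * df i * df j"
    and Rcs: "\<And>a b. Rc a b = Rc b a"
    and RcV: "\<And>i. (\<Sum>a\<in>UNIV. Rc i a * v a) = lam * df i"
    and tau: "tau = (\<Sum>j\<in>UNIV. \<Sum>k\<in>UNIV. G j k * Rc j k)"
    and W: "\<And>i j k. Rv i j k + tau/6 * (gg i k * df j - df i * gg j k)
              + 1/2 * (lam * df i * gg j k - Rc i k * df j + Rc j k * df i - lam * df j * gg i k) = 0"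
    and dv: "\<And>i j k. -1/2 * C i j k + 1/12 * (dtau i * gg j k - dtau j * gg i k) = 0"
    and cot: "\<And>i j k. C i j k = dlam i * gg j k - dlam j * gg i k - Rv i j k + mu * (df j * H i k - df i * H j k)"
    and mu: "mu \<noteq> -1/2"
    and nz: "df i0 \<noteq> 0"
  shows "\<exists>\<phi>. \<forall>j k. Rc j k = lam * gg j k + \<phi> * df j * df k"
    and "\<And>i j k. Rv i j k = -(lam/3) * (df i * gg j k - df j * gg i k)"
proof -
  have "1/2 + mu \<noteq> 0" using mu by simp
  from ricci_wedge_gradient[OF GL GR Gs ggs v RcV tau cotton_weyl_identity[OF qE W dv cot] this]
  have wedge: "\<And>i j k. df i * Rc j k - df j * Rc i k = (tau - lam) / 3 * (df i * gg j k - df j * gg i k)" .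
  have lower: "\<And>p. (\<Sum>l\<in>UNIV. gg p l * v l) = df p" unfolding v by (rule lower_raise[OF GR])
  note rank_one = ricci_rank_one_from_wedge[OF ggs Rcs lower N RcV wedge nz]
  then show "\<exists>\<phi>. \<forall>j k. Rc j k = lam * gg j k + \<phi> * df j * df k" by blast
  obtain \<phi> where Rc: "\<And>j k. Rc j k = lam * gg j k + \<phi> * df j * df k" using rank_one(2) by blast
  have "tau = 4 * lam" using rank_one(1) by simp
  then show "Rv i j k = -(lam/3) * (df i * gg j k - df j * gg i k)" for i j k
    using W[of i j k] unfolding Rc by (simp add: algebra_simps)
qed

lemma rank_one_hessian_derivative:
  fixes dH Gm :: tensor3 and H ddf :: tensor2 and df :: tensor1
  assumes D: "dH i j k * df l + H j k * ddf i l = dH i l k * df j + H l k * ddf i j"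
    and H: "\<And>a b. H a b = psi * df a * df b"
    and ddf: "\<And>a m. ddf a m = H a m + (\<Sum>p\<in>UNIV. Gm p a m * df p)"
  shows "(dH i j k - (\<Sum>m\<in>UNIV. Gm m i j * H m k + Gm m i k * H j m)) * df l
       = (dH i l k - (\<Sum>m\<in>UNIV. Gm m i l * H m k + Gm m i k * H l m)) * df j"
proof -
  have "dH i j k * df l + psi * df j * df k * (psi * df i * df l + (\<Sum>p\<in>UNIV. Gm p i l * df p))
     = dH i l k * df j + psi * df l * df k * (psi * df i * df j + (\<Sum>p\<in>UNIV. Gm p i j * df p))"
    using D unfolding ddf H .
  then show ?thesis unfolding H UNIV_4 by (simp add: algebra_simps)
qed

lemma curvature_gradient_symmetry:
  fixes nH Rv :: tensor3 and df :: tensor1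
  assumes Ric: "\<And>i j k. Rv i j k = nH i j k - nH j i k"
    and R3: "\<And>i j k l. nH i j k * df l = nH i l k * df j"
    and sym: "\<And>i j k. nH i j k = nH i k j"
  shows "Rv i j k * df l = Rv i j l * df k"
proof -
  have "Rv i j k * df l = nH i l k * df j - nH j l k * df i"
    unfolding Ric using R3[of i j k l] R3[of j i k l] by (simp add: algebra_simps)
  moreover have "Rv i j l * df k = nH i k l * df j - nH j k l * df i"
    unfolding Ric using R3[of i j l k] R3[of j i l k] by (simp add: algebra_simps)
  ultimately show ?thesis using sym[of i k l] sym[of j k l] by simp
qed

lemma lambda_vanishes:
  fixes gg G :: tensor2 and df v :: tensor1 and Rv :: tensor3
  assumes GL: "\<And>i k. (\<Sum>j\<in>UNIV. G i j * gg j k) = (if i = k then 1 else 0)"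
    and GR: "\<And>i k. (\<Sum>j\<in>UNIV. gg i j * G j k) = (if i = k then 1 else 0)"
    and Gs: "\<And>a b. G a b = G b a" and ggs: "\<And>a b. gg a b = gg b a"
    and v: "\<And>k. v k = (\<Sum>j\<in>UNIV. G k j * df j)"
    and N: "(\<Sum>k\<in>UNIV. df k * v k) = 0"
    and Rv: "\<And>i j k. Rv i j k = -(lam/3) * (df i * gg j k - df j * gg i k)"
    and S: "\<And>i j k l. Rv i j k * df l = Rv i j l * df k"
    and nz: "df i0 \<noteq> 0"
  shows "lam = 0"
proof -
  let ?i = i0
  have P2: "(\<Sum>j\<in>UNIV. \<Sum>k\<in>UNIV. G j k * df j * gg ?i k) = df ?i"
    by (rule contract_inverse_metric[OF GR Gs])
  have P3: "(\<Sum>j\<in>UNIV. \<Sum>k\<in>UNIV. G j k * df k * gg ?i j) = df ?i"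
  proof -
    have "(\<Sum>j\<in>UNIV. \<Sum>k\<in>UNIV. G j k * df k * gg ?i j) = (\<Sum>j\<in>UNIV. \<Sum>k\<in>UNIV. G j k * df j * gg ?i k)"
      unfolding UNIV_4 by (simp add: algebra_simps Gs)
    then show ?thesis using P2 by simp
  qed
  have P4: "(\<Sum>j\<in>UNIV. \<Sum>k\<in>UNIV. G j k * df j * df k) = 0"
  proof -
    have "(\<Sum>j\<in>UNIV. \<Sum>k\<in>UNIV. G j k * df j * df k) = (\<Sum>k\<in>UNIV. df k * v k)"
      unfolding v UNIV_4 by (simp add: algebra_simps Gs)
    then show ?thesis using N by simp
  qed
  have "0 = (\<Sum>j\<in>UNIV. \<Sum>k\<in>UNIV. G j k * (Rv ?i j k * df ?i - Rv ?i j ?i * df k))"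
    using S by simp
  also have "\<dots> = -(lam/3) * (df ?i * df ?i * (\<Sum>j\<in>UNIV. \<Sum>k\<in>UNIV. G j k * gg j k)
         - df ?i * (\<Sum>j\<in>UNIV. \<Sum>k\<in>UNIV. G j k * df j * gg ?i k)
         - df ?i * (\<Sum>j\<in>UNIV. \<Sum>k\<in>UNIV. G j k * df k * gg ?i j)
         + gg ?i ?i * (\<Sum>j\<in>UNIV. \<Sum>k\<in>UNIV. G j k * df j * df k))"
    unfolding Rv UNIV_4 by (simp add: algebra_simps ggs)
  also have "\<dots> = -(lam/3) * (2 * (df ?i * df ?i))"
    unfolding trace_inverse_metric[OF GL ggs] P2 P3 P4 by simp
  finally have "lam * (df ?i * df ?i) = 0" by simp
  then show ?thesis using nz by simp
qed

lemma recurrent_gradient_expansion: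
  fixes G H ddf :: tensor2 and Gm dG :: tensor3 and df :: tensor1
  assumes dG: "\<And>k j. dG i k j = - (\<Sum>a\<in>UNIV. G k a * Gm j i a + Gm k i a * G a j)"
    and ddf: "\<And>a m. ddf a m = H a m + (\<Sum>p\<in>UNIV. Gm p a m * df p)"
    and H: "\<And>a b. H a b = psi * df a * df b"
  shows "(\<Sum>j\<in>UNIV. dG i k j * df j + G k j * ddf i j) + (\<Sum>m\<in>UNIV. Gm k i m * (\<Sum>j\<in>UNIV. G m j * df j))
       = (psi * df i) * (\<Sum>j\<in>UNIV. G k j * df j)"
  unfolding dG ddf H UNIV_4 by (simp add: algebra_simps)

section \<open>The metric, its inverse and the Christoffel symbols\<close>

lemma matrix_inv_det_nz:
  fixes M :: "real^'n^'n"
  assumes "det M \<noteq> 0"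
  shows "M ** matrix_inv M = mat 1" "matrix_inv M ** M = mat 1"
proof -
  have "\<exists>A'. M ** A' = mat 1 \<and> A' ** M = mat 1"
    using assms invertible_det_nz unfolding invertible_def by blast
  then have "M ** matrix_inv M = mat 1 \<and> matrix_inv M ** M = mat 1"
    unfolding matrix_inv_def by (rule someI_ex)
  then show "M ** matrix_inv M = mat 1" "matrix_inv M ** M = mat 1" by auto
qed

locale lorentz_chart =
  fixes U :: "(real^4) set" and g :: metric
  assumes U_open: "open U" and lorentz: "lorentz_metric U g"
begin

lemma smooth_differentiable_at: "smooth_on U h \<Longrightarrow> y \<in> U \<Longrightarrow> h differentiable (at y)"
  by (rule smooth_on_imp_differentiable_at[OF U_open])

lemma metric_smooth: "smooth_on U (\<lambda>y. g y i j)"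
  using lorentz unfolding lorentz_metric_def by blast

lemma metric_sym: "y \<in> U \<Longrightarrow> g y i j = g y j i"
  using lorentz unfolding lorentz_metric_def lorentzian_at_def by blast

text \<open>In an orthonormal frame \<open>E\<close> the Gram matrix \<open>E\<^sup>T M E\<close> is \<open>diag(-1,1,1,1)\<close>, so \<open>det M \<noteq> 0\<close>.\<close>

lemma det_metric_nonzero:
  assumes y: "y \<in> U"
  shows "det (\<chi> a b. g y a b) \<noteq> 0"
proof -
  obtain e :: "4 \<Rightarrow> real^4"
    where e: "\<And>a b. bil g y (e a) (e b) = (if a = b then (if a = 0 then -1 else 1) else 0)"
    using lorentz y unfolding lorentz_metric_def lorentzian_at_def by blast
  define M :: "real^4^4" where "M = (\<chi> a b. g y a b)"
  define E :: "real^4^4" where "E = (\<chi> i a. e a $ i)"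
  define D :: "real^4^4" where "D = (\<chi> a b. if a = b then (if a = 0 then -1 else 1) else 0)"
  have "(transpose E ** M ** E) $ a $ b = D $ a $ b" for a b
  proof -
    have "(transpose E ** M ** E) $ a $ b = (\<Sum>j\<in>UNIV. (\<Sum>i\<in>UNIV. e a $ i * g y i j) * e b $ j)"
      by (simp add: matrix_matrix_mult_def transpose_def E_def M_def)
    also have "\<dots> = (\<Sum>j\<in>UNIV. \<Sum>i\<in>UNIV. g y i j * e a $ i * e b $ j)"
      by (simp add: sum_distrib_right sum_distrib_left mult_ac)
    also have "\<dots> = bil g y (e a) (e b)" unfolding bil_def by (rule sum.swap)
    finally show ?thesis using e by (simp add: D_def)
  qed
  then have "transpose E ** M ** E = D" by (simp add: vec_eq_iff)
  moreover have "det D = -1"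
    by (subst det_diagonal) (simp_all add: D_def)
  moreover have "det (transpose E ** M ** E) = det E * det M * det E" by (simp add: det_mul)
  ultimately have "det E * det M * det E = -1" by simp
  then show ?thesis unfolding M_def by auto
qed

lemma metric_ginv:
  assumes "y \<in> U"
  shows "(\<Sum>j\<in>UNIV. g y i j * ginv g y j k) = (if i = k then 1 else 0)"
proof -
  have "((\<chi> a b. g y a b) ** matrix_inv (\<chi> a b. g y a b)) $ i $ k = mat 1 $ i $ k"
    using matrix_inv_det_nz(1)[OF det_metric_nonzero[OF assms]] by simp
  then show ?thesis by (simp add: matrix_matrix_mult_def ginv_def mat_def)
qed

lemma ginv_metric:
  assumes "y \<in> U"
  shows "(\<Sum>j\<in>UNIV. ginv g y i j * g y j k) = (if i = k then 1 else 0)"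
proof -
  have "(matrix_inv (\<chi> a b. g y a b) ** (\<chi> a b. g y a b)) $ i $ k = mat 1 $ i $ k"
    using matrix_inv_det_nz(2)[OF det_metric_nonzero[OF assms]] by simp
  then show ?thesis by (simp add: matrix_matrix_mult_def ginv_def mat_def)
qed

lemma ginv_sym:
  assumes y: "y \<in> U"
  shows "ginv g y i j = ginv g y j i"
proof -
  define M :: "real^4^4" where "M = (\<chi> a b. g y a b)"
  define G where "G = matrix_inv M"
  have MG: "M ** G = mat 1" "G ** M = mat 1"
    using matrix_inv_det_nz[OF det_metric_nonzero[OF y]] unfolding M_def G_def by auto
  have "transpose M = M" using metric_sym[OF y] by (simp add: M_def transpose_def vec_eq_iff)
  then have "transpose G ** M = mat 1"
    using arg_cong[OF MG(1), of transpose] by (simp add: matrix_transpose_mul)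
  then have "transpose G = G"
    by (metis MG(1) matrix_mul_assoc matrix_mul_lid matrix_mul_rid)
  then show ?thesis by (simp add: ginv_def transpose_def G_def M_def vec_eq_iff)
qed

lemma ginv_cramer:
  assumes y: "y \<in> U"
  shows "ginv g y k c
    = det (\<chi> i j. if j = k then (if i = c then 1 else 0) else g y i j) / det (\<chi> a b. g y a b)"
proof -
  let ?M = "\<chi> a b. g y a b :: real^4^4"
  have "?M *v (matrix_inv ?M *v axis c 1) = axis c 1"
    using matrix_inv_det_nz[OF det_metric_nonzero[OF y]] by (simp add: matrix_vector_mul_assoc)
  then have "matrix_inv ?M *v axis c 1
      = (\<chi> k. det (\<chi> i j. if j = k then (axis c 1) $ i else ?M $ i $ j) / det ?M)"
    using cramer[OF det_metric_nonzero[OF y]] by blast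
  moreover have "(matrix_inv ?M *v axis c 1) $ k = matrix_inv ?M $ k $ c"
    by (simp add: matrix_vector_mult_def axis_def if_distrib cong: if_cong)
  moreover have "(\<chi> i j. if j = k then (axis c (1::real)) $ i else ?M $ i $ j)
      = (\<chi> i j. if j = k then (if i = c then 1 else 0) else g y i j)"
    by (simp add: axis_def fun_eq_iff)
  ultimately show ?thesis by (simp add: ginv_def)
qed

lemma ginv_smooth: "smooth_on U (\<lambda>y. ginv g y k c)"
proof -
  have "smooth_on U (\<lambda>y. if j = k then (if i = c then 1 else 0) else g y i j)" for i j
    by (cases "j = k") (simp_all add: smooth_on_const metric_smooth)
  then have "smooth_on U (\<lambda>y. det (\<chi> i j. if j = k then (if i = c then 1 else 0) else g y i j :: real^4^4))"
    by (rule smooth_on_det[OF U_open])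
  moreover have "smooth_on U (\<lambda>y. inverse (det (\<chi> a b. g y a b :: real^4^4)))"
    by (rule smooth_on_inverse[OF U_open smooth_on_det[OF U_open metric_smooth] det_metric_nonzero])
  ultimately have "smooth_on U (\<lambda>y. det (\<chi> i j. if j = k then (if i = c then 1 else 0) else g y i j :: real^4^4)
        * inverse (det (\<chi> a b. g y a b :: real^4^4)))"
    by (rule smooth_on_mult[OF U_open])
  then show ?thesis
    by (rule smooth_on_cong_open[OF U_open, rotated]) (simp add: ginv_cramer divide_inverse)
qed

lemma chr_smooth: "smooth_on U (chr g k i j)"
proof -
  have "chr g k i j = (\<lambda>x. 1/2 * (\<Sum>l\<in>UNIV. ginv g x k l *
      (pd i (\<lambda>y. g y j l) x + pd j (\<lambda>y. g y i l) x - pd l (\<lambda>y. g y i j) x)))"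
    by (rule ext) (simp add: chr_def)
  then show ?thesis
    by (simp only:) (intro smooth_on_mult[OF U_open] smooth_on_const smooth_on_sum[OF U_open] finite_class.finite_UNIV
        ginv_smooth smooth_on_add[OF U_open] smooth_on_diff[OF U_open] smooth_on_pd metric_smooth)
qed

lemma pd_metric_sym: "y \<in> U \<Longrightarrow> pd k (\<lambda>y. g y i j) y = pd k (\<lambda>y. g y j i) y"
  by (rule pd_cong_open[OF U_open]) (auto simp: metric_sym)

lemma chr_sym: "y \<in> U \<Longrightarrow> chr g k i j y = chr g k j i y"
  unfolding chr_def by (simp add: pd_metric_sym[of y _ i j] add.commute)

lemma chr_lower:
  assumes y: "y \<in> U"
  shows "(\<Sum>m\<in>UNIV. chr g m k i y * g y m j)
     = 1/2 * (pd k (\<lambda>y. g y i j) y + pd i (\<lambda>y. g y k j) y - pd j (\<lambda>y. g y k i) y)"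
  unfolding chr_def by (rule lower_raise_scaled[OF ginv_metric[OF y] ginv_sym[OF y]])

lemma pd_metric_chr:
  assumes y: "y \<in> U"
  shows "pd k (\<lambda>y. g y i j) y = (\<Sum>m\<in>UNIV. chr g m k i y * g y m j + chr g m k j y * g y i m)"
proof -
  have "(\<Sum>m\<in>UNIV. chr g m k j y * g y i m) = (\<Sum>m\<in>UNIV. chr g m k j y * g y m i)"
    using metric_sym[OF y] by simp
  also have "\<dots> = 1/2 * (pd k (\<lambda>y. g y j i) y + pd j (\<lambda>y. g y k i) y - pd i (\<lambda>y. g y k j) y)"
    by (rule chr_lower[OF y])
  finally show ?thesis
    unfolding sum.distrib chr_lower[OF y] pd_metric_sym[OF y, of k j i] by (simp add: field_simps)
qed

lemma pd_ginv_chr: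
  assumes y: "y \<in> U"
  shows "pd i (\<lambda>y. ginv g y d c) y
    = - (\<Sum>a\<in>UNIV. ginv g y d a * chr g c i a y + chr g d i a y * ginv g y a c)"
proof (rule inverse_metric_derivative[where gg="g y" and G="ginv g y" and Gm="\<lambda>m i a. chr g m i a y"
      and dg="\<lambda>i a b. pd i (\<lambda>z. g z a b) y" and dG="\<lambda>i b c. pd i (\<lambda>z. ginv g z b c) y",
      OF ginv_metric[OF y] metric_ginv[OF y] _ pd_metric_chr[OF y]])
  fix a c
  have "pd i (\<lambda>z. \<Sum>b\<in>UNIV. g z a b * ginv g z b c) y = pd i (\<lambda>z. if a = c then 1 else 0) y"
    by (rule pd_cong_open[OF U_open y]) (simp add: metric_ginv)
  then have "0 = pd i (\<lambda>z. \<Sum>b\<in>UNIV. g z a b * ginv g z b c) y" by (simp add: pd_const)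
  also have "\<dots> = (\<Sum>b\<in>UNIV. pd i (\<lambda>z. g z a b * ginv g z b c) y)"
    by (rule pd_sum) (auto intro!: smooth_differentiable_at[OF _ y] smooth_on_mult[OF U_open] metric_smooth ginv_smooth)
  also have "\<dots> = (\<Sum>b\<in>UNIV. pd i (\<lambda>z. g z a b) y * ginv g y b c + g y a b * pd i (\<lambda>z. ginv g z b c) y)"
    by (rule sum.cong[OF refl], rule pd_mult) (auto intro!: smooth_differentiable_at[OF _ y] metric_smooth ginv_smooth)
  finally show "(\<Sum>b\<in>UNIV. pd i (\<lambda>z. g z a b) y * ginv g y b c + g y a b * pd i (\<lambda>z. ginv g z b c) y) = 0"
    by simp
qed

end

section \<open>Isotropic quasi-Einstein structures\<close>

locale isotropic_qe = lorentz_chart +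
  fixes f :: "real^4 \<Rightarrow> real" and mu :: real and lam :: "real^4 \<Rightarrow> real"
  assumes f_smooth: "smooth_on U f" and lam_smooth: "smooth_on U lam"
    and qE: "\<forall>x\<in>U. \<forall>i j. hes g f i j x + ric g i j x - mu * pd i f x * pd j f x = lam x * g x i j"
    and isotropic: "\<forall>x\<in>U. grad g f x \<noteq> 0 \<and> bil g x (grad g f x) (grad g f x) = 0"
    and mu: "mu \<noteq> - 1/2"
    and div_weyl: "\<forall>x\<in>U. \<forall>i j k. divW g i j k x = 0"
    and weyl_grad: "\<forall>x\<in>U. \<forall>i j k. (\<Sum>l\<in>UNIV. weyl g i j k l x * grad g f x $ l) = 0"
begin

lemma pd_f_smooth: "smooth_on U (pd i f)"
  by (rule smooth_on_pd[OF f_smooth])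

lemma pd_pd_f_smooth: "smooth_on U (pd i (pd j f))"
  by (rule smooth_on_pd[OF pd_f_smooth])

lemma hes_smooth: "smooth_on U (hes g f i j)"
proof -
  have "hes g f i j = (\<lambda>x. pd i (pd j f) x - (\<Sum>k\<in>UNIV. chr g k i j x * pd k f x))"
    by (rule ext) (simp add: hes_def)
  then show ?thesis
    by (simp only:) (intro smooth_on_diff[OF U_open] pd_pd_f_smooth smooth_on_sum[OF U_open] finite_class.finite_UNIV
        smooth_on_mult[OF U_open] chr_smooth pd_f_smooth)
qed

lemma hes_sym: "x \<in> U \<Longrightarrow> hes g f i j x = hes g f j i x"
  unfolding hes_def using pd_commute[OF U_open f_smooth, of x i j] chr_sym by simp

lemma pd_pd_f_eq_hes: "pd a (pd m f) x = hes g f a m x + (\<Sum>p\<in>UNIV. chr g p a m x * pd p f x)"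
  by (simp add: hes_def)

lemma ric_eq_qe: "x \<in> U \<Longrightarrow> ric g i j x = lam x * g x i j - hes g f i j x + mu * pd i f x * pd j f x"
  using qE by (auto simp: algebra_simps)

lemma ric_sym: "x \<in> U \<Longrightarrow> ric g i j x = ric g j i x"
  using ric_eq_qe hes_sym metric_sym by simp

lemma grad_component: "grad g f x $ k = (\<Sum>j\<in>UNIV. ginv g x k j * pd j f x)"
  by (simp add: grad_def)

lemma grad_smooth: "smooth_on U (\<lambda>x. grad g f x $ k)"
  unfolding grad_component
  by (intro smooth_on_sum[OF U_open] finite_class.finite_UNIV smooth_on_mult[OF U_open] ginv_smooth pd_f_smooth)

lemma lower_grad: "x \<in> U \<Longrightarrow> (\<Sum>l\<in>UNIV. g x p l * grad g f x $ l) = pd p f x"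
  unfolding grad_component by (rule lower_raise[OF metric_ginv])

lemma df_grad_zero: "x \<in> U \<Longrightarrow> (\<Sum>k\<in>UNIV. pd k f x * grad g f x $ k) = 0"
  using isotropic quadratic_form_lower[of "g x" "\<lambda>l. grad g f x $ l" "\<lambda>p. pd p f x"] lower_grad
  unfolding bil_def by simp

lemma df_nonzero:
  assumes x: "x \<in> U"
  obtains i where "pd i f x \<noteq> 0"
proof -
  have "grad g f x \<noteq> 0" using isotropic x by blast
  then show ?thesis using that by (force simp: grad_def vec_eq_iff)
qed

text \<open>Differentiate the identity \<open>g(\<nabla>f, \<nabla>f) = 0\<close>.\<close>

lemma hes_grad_zero:
  assumes x: "x \<in> U"
  shows "(\<Sum>a\<in>UNIV. hes g f i a x * grad g f x $ a) = 0"
proof -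
  have "(\<Sum>a\<in>UNIV. \<Sum>b\<in>UNIV. ginv g y a b * pd a f y * pd b f y) = 0" if "y \<in> U" for y
    using df_grad_zero[OF that] unfolding grad_component UNIV_4 by (simp add: algebra_simps)
  then have "pd i (\<lambda>y. \<Sum>a\<in>UNIV. \<Sum>b\<in>UNIV. ginv g y a b * pd a f y * pd b f y) x = pd i (\<lambda>y. 0) x"
    by (intro pd_cong_open[OF U_open x])
  then have "0 = pd i (\<lambda>y. \<Sum>a\<in>UNIV. \<Sum>b\<in>UNIV. ginv g y a b * pd a f y * pd b f y) x"
    by (simp add: pd_const)
  also have "\<dots> = (\<Sum>a\<in>UNIV. pd i (\<lambda>y. \<Sum>b\<in>UNIV. ginv g y a b * pd a f y * pd b f y) x)"
    by (rule pd_sum) (auto intro!: smooth_differentiable_at[OF _ x] smooth_on_sum[OF U_open]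
        smooth_on_mult[OF U_open] ginv_smooth pd_f_smooth)
  also have "\<dots> = (\<Sum>a\<in>UNIV. \<Sum>b\<in>UNIV. pd i (\<lambda>y. ginv g y a b * pd a f y * pd b f y) x)"
    by (rule sum.cong[OF refl], rule pd_sum)
       (auto intro!: smooth_differentiable_at[OF _ x] smooth_on_mult[OF U_open] ginv_smooth pd_f_smooth)
  also have "\<dots> = (\<Sum>a\<in>UNIV. \<Sum>b\<in>UNIV. pd i (\<lambda>y. ginv g y a b) x * pd a f x * pd b f x
        + ginv g x a b * pd i (pd a f) x * pd b f x + ginv g x a b * pd a f x * pd i (pd b f) x)"
  proof (intro sum.cong refl)
    fix a b
    have "(\<lambda>y. ginv g y a b) differentiable (at x)" "pd a f differentiable (at x)"
      "pd b f differentiable (at x)" "(\<lambda>y. ginv g y a b * pd a f y) differentiable (at x)"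
      by (intro smooth_differentiable_at[OF _ x] smooth_on_mult[OF U_open] ginv_smooth pd_f_smooth)+
    then show "pd i (\<lambda>y. ginv g y a b * pd a f y * pd b f y) x = pd i (\<lambda>y. ginv g y a b) x * pd a f x * pd b f x
        + ginv g x a b * pd i (pd a f) x * pd b f x + ginv g x a b * pd a f x * pd i (pd b f) x"
      by (simp add: pd_mult algebra_simps)
  qed
  finally have "(\<Sum>a\<in>UNIV. hes g f i a x * (\<Sum>b\<in>UNIV. ginv g x a b * pd b f x)) = 0"
    by (intro hessian_null_gradient[where G="ginv g x" and dG="\<lambda>i a b. pd i (\<lambda>y. ginv g y a b) x"
        and Gm="\<lambda>m i a. chr g m i a x" and ddf="\<lambda>a b. pd a (pd b f) x", OF ginv_sym[OF x] pd_ginv_chr[OF x]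
        pd_pd_f_eq_hes]) simp
  then show ?thesis unfolding grad_component .
qed

lemma ric_grad: "x \<in> U \<Longrightarrow> (\<Sum>a\<in>UNIV. ric g i a x * grad g f x $ a) = lam x * pd i f x"
  by (rule ricci_gradient_expansion[OF lower_grad df_grad_zero hes_grad_zero ric_eq_qe])

lemma pd_hes:
  assumes x: "x \<in> U"
  shows "pd a (hes g f j k) x = pd a (pd j (pd k f)) x
     - (\<Sum>m\<in>UNIV. pd a (chr g m j k) x * pd m f x + chr g m j k x * pd a (pd m f) x)"
proof -
  have "pd a (hes g f j k) x = pd a (\<lambda>x. pd j (pd k f) x - (\<Sum>m\<in>UNIV. chr g m j k x * pd m f x)) x"
    by (simp add: hes_def[abs_def])
  also have "\<dots> = pd a (pd j (pd k f)) x - pd a (\<lambda>x. \<Sum>m\<in>UNIV. chr g m j k x * pd m f x) x"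
    by (rule pd_diff) (auto intro!: smooth_differentiable_at[OF _ x] pd_pd_f_smooth smooth_on_sum[OF U_open]
        smooth_on_mult[OF U_open] chr_smooth pd_f_smooth)
  also have "pd a (\<lambda>x. \<Sum>m\<in>UNIV. chr g m j k x * pd m f x) x
      = (\<Sum>m\<in>UNIV. pd a (\<lambda>x. chr g m j k x * pd m f x) x)"
    by (rule pd_sum) (auto intro!: smooth_differentiable_at[OF _ x] smooth_on_mult[OF U_open] chr_smooth pd_f_smooth)
  also have "\<dots> = (\<Sum>m\<in>UNIV. pd a (chr g m j k) x * pd m f x + chr g m j k x * pd a (pd m f) x)"
    by (rule sum.cong[OF refl], rule pd_mult) (auto intro!: smooth_differentiable_at[OF _ x] chr_smooth pd_f_smooth)
  finally show ?thesis .
qed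

definition cov_hes :: "real^4 \<Rightarrow> 4 \<Rightarrow> 4 \<Rightarrow> 4 \<Rightarrow> real" where
  "cov_hes x i j k = pd i (hes g f j k) x
     - (\<Sum>m\<in>UNIV. chr g m i j x * hes g f m k x + chr g m i k x * hes g f j m x)"

lemma cov_hes_sym: "x \<in> U \<Longrightarrow> cov_hes x i j k = cov_hes x i k j"
  unfolding cov_hes_def
  by (simp add: pd_cong_open[OF U_open, of x "hes g f j k" "hes g f k j"] hes_sym add.commute)

lemma riem_grad:
  assumes x: "x \<in> U"
  shows "(\<Sum>l\<in>UNIV. riem g i j k l x * grad g f x $ l) = - (\<Sum>p\<in>UNIV. rstd g p k i j x * pd p f x)"
proof -
  have "(\<Sum>l\<in>UNIV. riem g i j k l x * grad g f x $ l)
      = - (\<Sum>p\<in>UNIV. rstd g p k i j x * (\<Sum>l\<in>UNIV. g x p l * grad g f x $ l))"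
    unfolding riem_def UNIV_4 by (simp add: algebra_simps)
  then show ?thesis using lower_grad[OF x] by simp
qed

lemma ricci_identity_hes:
  assumes x: "x \<in> U"
  shows "cov_hes x i j k - cov_hes x j i k = (\<Sum>l\<in>UNIV. riem g i j k l x * grad g f x $ l)"
  unfolding cov_hes_def riem_grad[OF x] rstd_def
  by (rule ricci_identity_expansion[where dH="\<lambda>a j k. pd a (hes g f j k) x"
      and dddf="\<lambda>a j k. pd a (pd j (pd k f)) x" and dGm="\<lambda>a m j k. pd a (chr g m j k) x"
      and Gm="\<lambda>m j k. chr g m j k x" and ddf="\<lambda>a m. pd a (pd m f) x",
      OF pd_hes[OF x] pd_pd_f_eq_hes pd_commute[OF U_open pd_f_smooth x] chr_sym[OF x]])

lemma pd_ric:
  assumes x: "x \<in> U"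
  shows "pd i (ric g j k) x = pd i lam x * g x j k + lam x * pd i (\<lambda>y. g y j k) x - pd i (hes g f j k) x
      + mu * (pd i (pd j f) x * pd k f x + pd j f x * pd i (pd k f) x)"
proof -
  note differentiable = smooth_differentiable_at[OF _ x] smooth_on_mult[OF U_open] smooth_on_diff[OF U_open]
    lam_smooth metric_smooth hes_smooth smooth_on_const pd_f_smooth
  have "pd i (ric g j k) x = pd i (\<lambda>y. lam y * g y j k - hes g f j k y + mu * (pd j f y * pd k f y)) x"
    by (rule pd_cong_open[OF U_open x]) (simp add: ric_eq_qe mult.assoc)
  also have "\<dots> = pd i (\<lambda>y. lam y * g y j k - hes g f j k y) x + pd i (\<lambda>y. mu * (pd j f y * pd k f y)) x"
    by (rule pd_add) (auto intro!: differentiable)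
  also have "pd i (\<lambda>y. lam y * g y j k - hes g f j k y) x = pd i (\<lambda>y. lam y * g y j k) x - pd i (hes g f j k) x"
    by (rule pd_diff) (auto intro!: differentiable)
  also have "pd i (\<lambda>y. lam y * g y j k) x = pd i lam x * g x j k + lam x * pd i (\<lambda>y. g y j k) x"
    by (rule pd_mult) (auto intro!: differentiable)
  also have "pd i (\<lambda>y. mu * (pd j f y * pd k f y)) x = mu * pd i (\<lambda>y. pd j f y * pd k f y) x"
    by (rule pd_cmult) (auto intro!: differentiable)
  also have "pd i (\<lambda>y. pd j f y * pd k f y) x = pd i (pd j f) x * pd k f x + pd j f x * pd i (pd k f) x"
    by (rule pd_mult) (auto intro!: differentiable)
  finally show ?thesis by simp
qed

lemma covric_qe:
  assumes x: "x \<in> U"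
  shows "covric g i j k x = pd i lam x * g x j k - cov_hes x i j k
    + mu * (hes g f i j x * pd k f x + pd j f x * hes g f i k x)"
  unfolding covric_def cov_hes_def
  by (rule covariant_ricci_expansion[where dg="\<lambda>i j k. pd i (\<lambda>y. g y j k) x"
      and dH="\<lambda>a j k. pd a (hes g f j k) x" and ddf="\<lambda>a m. pd a (pd m f) x"
      and Gm="\<lambda>m j k. chr g m j k x", OF pd_ric[OF x] pd_metric_chr[OF x] pd_pd_f_eq_hes ric_eq_qe[OF x]])

lemma covric_antisym:
  assumes x: "x \<in> U"
  shows "covric g i j k x - covric g j i k x = pd i lam x * g x j k - pd j lam x * g x i k
     - (\<Sum>l\<in>UNIV. riem g i j k l x * grad g f x $ l)
     + mu * (pd j f x * hes g f i k x - pd i f x * hes g f j k x)"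
  unfolding covric_qe[OF x] ricci_identity_hes[OF x, symmetric]
  using hes_sym[OF x, of i j] by (simp add: algebra_simps)

lemma weyl_grad_expanded:
  assumes x: "x \<in> U"
  shows "(\<Sum>l\<in>UNIV. riem g i j k l x * grad g f x $ l)
      + scal g x / 6 * (g x i k * pd j f x - pd i f x * g x j k)
      + 1/2 * (lam x * pd i f x * g x j k - ric g i k x * pd j f x
               + ric g j k x * pd i f x - lam x * pd j f x * g x i k) = 0"
proof -
  have "(\<Sum>l\<in>UNIV. weyl g i j k l x * grad g f x $ l)
     = (\<Sum>l\<in>UNIV. riem g i j k l x * grad g f x $ l)
       + scal g x / 6 * (g x i k * (\<Sum>l\<in>UNIV. g x j l * grad g f x $ l)
                         - (\<Sum>l\<in>UNIV. g x i l * grad g f x $ l) * g x j k)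
       + 1/2 * ((\<Sum>l\<in>UNIV. ric g i l x * grad g f x $ l) * g x j k
                - ric g i k x * (\<Sum>l\<in>UNIV. g x j l * grad g f x $ l)
                + ric g j k x * (\<Sum>l\<in>UNIV. g x i l * grad g f x $ l)
                - (\<Sum>l\<in>UNIV. ric g j l x * grad g f x $ l) * g x i k)"
    unfolding weyl_def UNIV_4 by (simp add: algebra_simps)
  then show ?thesis using weyl_grad x unfolding lower_grad[OF x] ric_grad[OF x] by (simp add: algebra_simps)
qed

lemma ricci_and_curvature_grad:
  assumes x: "x \<in> U"
  shows "\<exists>\<phi>. \<forall>j k. ric g j k x = lam x * g x j k + \<phi> * pd j f x * pd k f x"
    and "(\<Sum>l\<in>UNIV. riem g i j k l x * grad g f x $ l) = -(lam x/3) * (pd i f x * g x j k - pd j f x * g x i k)"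
proof -
  obtain i0 where nz: "pd i0 f x \<noteq> 0" using df_nonzero[OF x] .
  have "-1/2 * (covric g i j k x - covric g j i k x)
      + 1/12 * (pd i (scal g) x * g x j k - pd j (scal g) x * g x i k) = 0" for i j k
    using div_weyl x unfolding divW_def by simp
  note consequences = weyl_divergence_consequences[where gg="g x" and Rc="\<lambda>a b. ric g a b x"
      and H="\<lambda>a b. hes g f a b x" and df="\<lambda>a. pd a f x" and v="\<lambda>a. grad g f x $ a"
      and Rv="\<lambda>i j k. \<Sum>l\<in>UNIV. riem g i j k l x * grad g f x $ l"
      and C="\<lambda>i j k. covric g i j k x - covric g j i k x",
      OF ginv_metric[OF x] metric_ginv[OF x] ginv_sym[OF x] metric_sym[OF x] grad_component
      df_grad_zero[OF x] _ ric_sym[OF x] ric_grad[OF x] _ weyl_grad_expanded[OF x] this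
      covric_antisym[OF x] mu nz]
  show "\<exists>\<phi>. \<forall>j k. ric g j k x = lam x * g x j k + \<phi> * pd j f x * pd k f x"
    by (rule consequences(1)) (simp_all add: ric_eq_qe[OF x] scal_def)
  show "(\<Sum>l\<in>UNIV. riem g i j k l x * grad g f x $ l) = -(lam x/3) * (pd i f x * g x j k - pd j f x * g x i k)"
    by (rule consequences(2)) (simp_all add: ric_eq_qe[OF x] scal_def)
qed

lemma hes_rank_one:
  assumes x: "x \<in> U"
  obtains \<psi> where "\<And>a b. hes g f a b x = \<psi> * pd a f x * pd b f x"
proof -
  obtain \<phi> where "\<And>j k. ric g j k x = lam x * g x j k + \<phi> * pd j f x * pd k f x"
    using ricci_and_curvature_grad(1)[OF x] by blast
  then have "hes g f a b x = (mu - \<phi>) * pd a f x * pd b f x" for a b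
    using ric_eq_qe[OF x, of a b] by (simp add: algebra_simps)
  then show ?thesis by (rule that)
qed

text \<open>Differentiating \<open>Hes f (X, Z) df(T) = Hes f (T, Z) df(X)\<close>, valid since the Hessian has rank one.\<close>

lemma cov_hes_rank_one:
  assumes x: "x \<in> U"
  shows "cov_hes x i j k * pd l f x = cov_hes x i l k * pd j f x"
proof -
  have "pd i (\<lambda>y. hes g f j k y * pd l f y) x = pd i (\<lambda>y. hes g f l k y * pd j f y) x"
  proof (rule pd_cong_open[OF U_open x])
    fix y assume y: "y \<in> U"
    obtain \<psi> where "\<And>a b. hes g f a b y = \<psi> * pd a f y * pd b f y" using hes_rank_one[OF y] by blast
    then show "hes g f j k y * pd l f y = hes g f l k y * pd j f y" by simp
  qed
  then have "pd i (hes g f j k) x * pd l f x + hes g f j k x * pd i (pd l f) x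
      = pd i (hes g f l k) x * pd j f x + hes g f l k x * pd i (pd j f) x"
    by (simp add: pd_mult smooth_differentiable_at[OF _ x] hes_smooth pd_f_smooth)
  moreover obtain \<psi> where "\<And>a b. hes g f a b x = \<psi> * pd a f x * pd b f x"
    using hes_rank_one[OF x] by blast
  ultimately show ?thesis
    unfolding cov_hes_def
    by (rule rank_one_hessian_derivative[where ddf="\<lambda>a m. pd a (pd m f) x", OF _ _ pd_pd_f_eq_hes])
qed

lemma lam_zero:
  assumes x: "x \<in> U"
  shows "lam x = 0"
proof -
  obtain i0 where nz: "pd i0 f x \<noteq> 0" using df_nonzero[OF x] .
  have "(\<Sum>m\<in>UNIV. riem g i j k m x * grad g f x $ m) * pd l f x
      = (\<Sum>m\<in>UNIV. riem g i j l m x * grad g f x $ m) * pd k f x" for i j k l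
    by (rule curvature_gradient_symmetry[OF ricci_identity_hes[OF x, symmetric] cov_hes_rank_one[OF x]
        cov_hes_sym[OF x]])
  then show ?thesis
    by (rule lambda_vanishes[where gg="g x" and df="\<lambda>a. pd a f x",
        OF ginv_metric[OF x] metric_ginv[OF x] ginv_sym[OF x] metric_sym[OF x] grad_component
        df_grad_zero[OF x] ricci_and_curvature_grad(2)[OF x] _ nz])
qed

lemma grad_recurrent:
  assumes x: "x \<in> U" and H: "\<And>a b. hes g f a b x = \<psi> * pd a f x * pd b f x"
  shows "pd i (\<lambda>y. grad g f y $ k) x + (\<Sum>m\<in>UNIV. chr g k i m x * grad g f x $ m)
    = \<psi> * pd i f x * grad g f x $ k"
proof -
  have "pd i (\<lambda>y. \<Sum>j\<in>UNIV. ginv g y k j * pd j f y) x = (\<Sum>j\<in>UNIV. pd i (\<lambda>y. ginv g y k j * pd j f y) x)"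
    by (rule pd_sum) (auto intro!: smooth_differentiable_at[OF _ x] smooth_on_mult[OF U_open] ginv_smooth pd_f_smooth)
  also have "\<dots> = (\<Sum>j\<in>UNIV. pd i (\<lambda>y. ginv g y k j) x * pd j f x + ginv g x k j * pd i (pd j f) x)"
    by (rule sum.cong[OF refl], rule pd_mult) (auto intro!: smooth_differentiable_at[OF _ x] ginv_smooth pd_f_smooth)
  finally have pd_grad: "pd i (\<lambda>y. \<Sum>j\<in>UNIV. ginv g y k j * pd j f y) x = \<dots>" .
  show ?thesis
    unfolding grad_component pd_grad
    by (rule recurrent_gradient_expansion[where G="ginv g x" and Gm="\<lambda>m j k. chr g m j k x"
        and ddf="\<lambda>a m. pd a (pd m f) x", OF pd_ginv_chr[OF x] pd_pd_f_eq_hes H])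
qed

lemma pure_radiation: "pure_radiation_parallel U g"
proof -
  define \<phi> where "\<phi> x = (SOME \<phi>. \<forall>j k. ric g j k x = \<phi> * pd j f x * pd k f x)" for x
  define \<alpha> where "\<alpha> i x = (mu - \<phi> x) * pd i f x" for i x
  have ric: "ric g j k x = \<phi> x * pd j f x * pd k f x" if x: "x \<in> U" for x j k
  proof -
    have "\<exists>\<phi>. \<forall>j k. ric g j k x = \<phi> * pd j f x * pd k f x"
      using ricci_and_curvature_grad(1)[OF x] lam_zero[OF x] by simp
    then show ?thesis unfolding \<phi>_def
      by (rule someI_ex[where P="\<lambda>\<phi>. \<forall>j k. ric g j k x = \<phi> * pd j f x * pd k f x", THEN spec, THEN spec])
  qed
  have "hes g f a b x = (mu - \<phi> x) * pd a f x * pd b f x" if "x \<in> U" for x a b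
    using ric_eq_qe[OF that] ric[OF that] lam_zero[OF that] by (simp add: algebra_simps)
  then have "\<forall>x\<in>U. grad g f x \<noteq> 0 \<and> bil g x (grad g f x) (grad g f x) = 0 \<and>
      (\<forall>i k. pd i (\<lambda>y. grad g f y $ k) x + (\<Sum>m\<in>UNIV. chr g k i m x * grad g f x $ m)
         = \<alpha> i x * grad g f x $ k) \<and>
      (\<forall>i j. ric g i j x = \<phi> x * (\<Sum>a\<in>UNIV. g x i a * grad g f x $ a) * (\<Sum>b\<in>UNIV. g x j b * grad g f x $ b))"
    using isotropic grad_recurrent ric lower_grad unfolding \<alpha>_def by simp
  then show ?thesis
    unfolding pure_radiation_parallel_def using U_open grad_smooth by blast
qed

end

theorem lemma2p7:
  fixes U :: "(real^4) set" and g :: metric and f :: "real^4 \<Rightarrow> real"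
    and \<mu> :: real and lam :: "real^4 \<Rightarrow> real"
  assumes "open U"
    and "lorentz_metric U g"
    and "smooth_on U f"
    and "smooth_on U lam"
    and "\<forall>x\<in>U. \<forall>i j. hes g f i j x + ric g i j x - \<mu> * pd i f x * pd j f x = lam x * g x i j"
    and "\<forall>x\<in>U. grad g f x \<noteq> 0 \<and> bil g x (grad g f x) (grad g f x) = 0"
    and "\<mu> \<noteq> - 1/2"
    and "\<forall>x\<in>U. \<forall>i j k. divW g i j k x = 0"
    and "\<forall>x\<in>U. \<forall>i j k. (\<Sum>l\<in>UNIV. weyl g i j k l x * grad g f x $ l) = 0"
  shows "(\<forall>x\<in>U. lam x = 0) \<and> pure_radiation_parallel U g"
proof -
  interpret isotropic_qe U g f \<mu> lam
    by unfold_locales (use assms in auto)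
  show ?thesis using lam_zero pure_radiation by blast
qed

end
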